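(* Assume Condition (C1) holds with $\alpha\in(0,1]$. If there exists $m\in\mathbb{N}_+$ such that $$\liminf_{n\to\infty}\frac{\Phi_\Lambda(n)-\Phi_\mu(n)}{\prod_{\ell=0}^m\log^{(\ell)}n}>-\infty,$$ then the block-counting process $N$ does not explode.
   Context: Setting: $\mathbb{N}_+=\{1,2,\dots\}$, $\bar{\mathbb{N}}_+=\mathbb{N}_+\cup\{\infty\}$. $\Lambda$ is a finite measure on $[0,1]$ with $\Lambda(\{1\})=0$, absolutely continuous w.r.t. Lebesgue measure. For $2\le k\le n$, $\lambda_{n,k}=\int_{[0,1]}x^{k-2}(1-x)^{n-k}\Lambda(dx)$ and $\Phi_\Lambda(n)=\sum_{k=2}^n\binom nk\lambda_{n,k}(k-1)$. $\mu$ is a finite measure on $\mathbb{N}_+$ (splitting measure; $\mu(k):=\mu(\{k\})$) and $\Phi_\mu(n)=n\sum_{k=1}^n k\mu(k)$. $N=(N_t)_{t\ge0}$ is the block-counting process ($N_t$ = number of blocks) of a simple exchangeable fragmentation–coagulation process on partitions of $\mathbb{N}_+$, whose coagulations are those of the $\Lambda$-coalescent (no simultaneous multiple mergers) and whose fragmentations occur at finite rate, each splitting one block into $k+1$ infinite blocks with the image of the fragmentation measure under $\pi\mapsto\#\pi-1$ equal to $\mu$. Started from $n\in\mathbb{N}_+$ and up to $\tau^+_\infty=\inf\{t>0:N_{t-}=\infty\}$, $N$ is the continuous-time Markov chain on $\mathbb{N}_+$ jumping from $n$ to $n-k+1$ at rate $\binom nk\lambda_{n,k}$ ($2\le k\le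 n$) and from $n$ to $n+k$ at rate $n\mu(k)$ ($k\ge1$). Explosion: $N$ explodes if, started from any finite $N_0$, $\mathbf{P}(N_t=\infty\text{ for some }t>0)=1$; otherwise it does not explode. Condition (C1): $\mu(n)\sim b(\log n)^\alpha n^{-2}$ as $n\to\infty$ for constants $b>0,\alpha>0$. $\log^{(\ell)}$ denotes the $\ell$-fold iterated natural logarithm, with $\log^{(0)}n=n$. *)

theory Defs
  imports "HOL-Probability.Probability"
begin

definition lam_coef :: "real measure \<Rightarrow> nat \<Rightarrow> nat \<Rightarrow> real" where
  "lam_coef Lam n k = (LINT x:{0..1}|Lam. x ^ (k - 2) * (1 - x) ^ (n - k))"

definition Phi_Lam :: "real measure \<Rightarrow> nat \<Rightarrow> real" where
  "Phi_Lam Lam n = (\<Sum>k=2..n. real (n choose k) * lam_coef Lam n k * (real k - 1))"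

text \<open>The splitting measure mu on N_+ is given by its point masses mu k (k >= 1).\<close>
definition Phi_mu :: "(nat \<Rightarrow> real) \<Rightarrow> nat \<Rightarrow> real" where
  "Phi_mu mu n = real n * (\<Sum>k=1..n. real k * mu k)"

definition bc_rate :: "real measure \<Rightarrow> (nat \<Rightarrow> real) \<Rightarrow> nat \<Rightarrow> nat \<Rightarrow> real" where
  "bc_rate Lam mu n m =
     (if 1 \<le> m \<and> m < n then real (n choose (n - m + 1)) * lam_coef Lam n (n - m + 1)
      else if n < m then real n * mu (m - n) else 0)"

definition bc_total_rate :: "real measure \<Rightarrow> (nat \<Rightarrow> real) \<Rightarrow> nat \<Rightarrow> real" where
  "bc_total_rate Lam mu n =
     (\<Sum>k=2..n. real (n choose k) * lam_coef Lam n k) + real n * (\<Sum>k. mu (Suc k))"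

definition bc_jump_prob :: "real measure \<Rightarrow> (nat \<Rightarrow> real) \<Rightarrow> nat \<Rightarrow> nat \<Rightarrow> real" where
  "bc_jump_prob Lam mu n m =
     (if bc_total_rate Lam mu n > 0 then bc_rate Lam mu n m / bc_total_rate Lam mu n
      else if m = n then 1 else 0)"

text \<open>(M, X, E) realizes the block-counting process started at n0 (standard jump-chain /
  holding-time construction): X is the embedded jump chain started at n0, E k are i.i.d.
  Exp(1) variables independent of X, and the k-th holding time is E k / q(X k).\<close>
definition bc_realization ::
  "real measure \<Rightarrow> (nat \<Rightarrow> real) \<Rightarrow> nat \<Rightarrow> 'w measure \<Rightarrow> (nat \<Rightarrow> 'w \<Rightarrow> nat) \<Rightarrow> (nat \<Rightarrow> 'w \<Rightarrow> real) \<Rightarrow> bool"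
where
  "bc_realization Lam mu n0 M X E \<longleftrightarrow>
     prob_space M \<and>
     (\<forall>k. X k \<in> M \<rightarrow>\<^sub>M count_space UNIV) \<and>
     (\<forall>k. E k \<in> borel_measurable M) \<and>
     (\<forall>k xs. length xs = Suc k \<longrightarrow>
        measure M {\<omega> \<in> space M. \<forall>i\<le>k. X i \<omega> = xs ! i} =
          (if xs ! 0 = n0 then 1 else 0) * (\<Prod>i<k. bc_jump_prob Lam mu (xs ! i) (xs ! Suc i))) \<and>
     (\<forall>k. distributed M lborel (E k) (\<lambda>x. ennreal (exponential_density 1 x))) \<and>
     prob_space.indep_vars M (\<lambda>_. borel) E UNIV \<and>
     prob_space.indep_var M (PiM UNIV (\<lambda>_. count_space UNIV)) (\<lambda>\<omega> k. X k \<omega>)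
                           (PiM UNIV (\<lambda>_. borel)) (\<lambda>\<omega> k. E k \<omega>)"

text \<open>Explosion on the path omega: the explosion time tau = sum of all holding times is finite.\<close>
definition bc_explodes_on ::
  "real measure \<Rightarrow> (nat \<Rightarrow> real) \<Rightarrow> (nat \<Rightarrow> 'w \<Rightarrow> nat) \<Rightarrow> (nat \<Rightarrow> 'w \<Rightarrow> real) \<Rightarrow> 'w \<Rightarrow> bool"
where
  "bc_explodes_on Lam mu X E \<omega> \<longleftrightarrow>
     (\<forall>k. bc_total_rate Lam mu (X k \<omega>) > 0) \<and>
     summable (\<lambda>k. E k \<omega> / bc_total_rate Lam mu (X k \<omega>))"

text \<open>N explodes: started from any finite N_0 >= 1, explosion happens with probability 1.
  M n0, X n0, E n0 is the realization of the process started from n0.\<close>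
definition bc_explodes ::
  "real measure \<Rightarrow> (nat \<Rightarrow> real) \<Rightarrow> (nat \<Rightarrow> 'w measure) \<Rightarrow> (nat \<Rightarrow> nat \<Rightarrow> 'w \<Rightarrow> nat)
     \<Rightarrow> (nat \<Rightarrow> nat \<Rightarrow> 'w \<Rightarrow> real) \<Rightarrow> bool"
where
  "bc_explodes Lam mu M X E \<longleftrightarrow>
     (\<forall>n0\<ge>1. measure (M n0) {\<omega> \<in> space (M n0). bc_explodes_on Lam mu (X n0) (E n0) \<omega>} = 1)"

end

theory Submission
  imports Defs
begin

text \<open>
  Write \<open>q\<close> for the total jump rate, \<open>p\<close> for the transition probabilities of the embedded
  chain \<open>X\<close> and \<open>T k = (\<Sum>j<k. E j / q (X j))\<close> for the jump times, so that explosion means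
  that \<open>T k\<close> converges. If \<open>W \<ge> 0\<close> tends to infinity and
  \<open>q x / (q x + c) * (\<Sum>y. p x y * W y) \<le> W x\<close>, then \<open>exp (- c * T k) * W (X k)\<close> and
  \<open>(\<Prod>j<k. 1 + 1 / q (X j)) * exp (- T k)\<close> have bounded expectations, so by Fatou's lemma
  their sum has a finite liminf almost surely. On an explosion path the sum tends to infinity:
  if \<open>\<Sum>k. 1 / q (X k)\<close> converges then \<open>X k\<close> tends to infinity and the first term blows up,
  otherwise the second one does.

  The Lyapunov function is \<open>W n = 1 + G m (ln n)\<close> (\<open>lyap\<close>), where \<open>G 0 y = y\<close> and
  \<open>G (l + 1) y = ln (1 + G l y)\<close> (\<open>ln1p_iter\<close>); it grows like the \<open>m + 1\<close>-fold iterated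
  logarithm. Concavity of \<open>G m\<close> bounds \<open>\<Sum>y. rate n y * W y\<close> by
  \<open>q n * W n + G' m (ln n) * (R n - \<Phi>\<^sub>\<Lambda> n / n)\<close>, where
  \<open>R n = n * (\<Sum>k. \<mu> k * ln (1 + k / n))\<close> (\<open>frag_moment\<close>) is at most \<open>\<Phi>\<^sub>\<mu> n / n + O(ln n)\<close>
  by (C1) with \<open>\<alpha> \<le> 1\<close>. As \<open>G' m (ln n)\<close> is at most \<open>1 / (ln n * \<dots> * log\<^sup>(\<^sup>m\<^sup>) n)\<close> and at
  most \<open>1 / (1 + ln n)\<close>, the liminf hypothesis bounds this correction by a constant \<open>c\<close>.
\<close>

section \<open>Jump chains with exponential holding times\<close>

lemma nn_integral_split_by_value:
  fixes U :: "'a \<Rightarrow> nat" and h :: "'a \<Rightarrow> ennreal"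
  assumes U: "U \<in> measurable M (count_space UNIV)" and h: "h \<in> borel_measurable M"
  shows "(\<integral>\<^sup>+\<omega>. h \<omega> \<partial>M) = (\<Sum>i. \<integral>\<^sup>+\<omega>. h \<omega> * indicator {\<omega>\<in>space M. U \<omega> = i} \<omega> \<partial>M)"
proof -
  have "(\<integral>\<^sup>+\<omega>. h \<omega> \<partial>M) = (\<integral>\<^sup>+\<omega>. (\<Sum>i. h \<omega> * indicator {\<omega>\<in>space M. U \<omega> = i} \<omega>) \<partial>M)"
  proof (rule nn_integral_cong)
    fix \<omega> assume "\<omega> \<in> space M"
    then have "(\<Sum>i. h \<omega> * indicator {\<omega>\<in>space M. U \<omega> = i} \<omega>)
        = (\<Sum>i\<in>{U \<omega>}. h \<omega> * indicator {\<omega>\<in>space M. U \<omega> = i} \<omega>)"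
      by (intro suminf_finite) auto
    with \<open>\<omega> \<in> space M\<close> show "h \<omega> = (\<Sum>i. h \<omega> * indicator {\<omega>\<in>space M. U \<omega> = i} \<omega>)"
      by simp
  qed
  also have "\<dots> = (\<Sum>i. \<integral>\<^sup>+\<omega>. h \<omega> * indicator {\<omega>\<in>space M. U \<omega> = i} \<omega> \<partial>M)"
  proof (rule nn_integral_suminf)
    fix i
    have "{\<omega>\<in>space M. U \<omega> = i} = U -` {i} \<inter> space M" by auto
    with U have "{\<omega>\<in>space M. U \<omega> = i} \<in> sets M" by (simp add: measurable_sets)
    with h show "(\<lambda>\<omega>. h \<omega> * indicator {\<omega>\<in>space M. U \<omega> = i} \<omega>) \<in> borel_measurable M"
      by measurable
  qed
  finally show ?thesis .
qed

lemma (in prob_space) nn_integral_exp_exponential: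
  assumes Y: "distributed M lborel Y (\<lambda>x. ennreal (exponential_density 1 x))" and t: "0 \<le> t"
  shows "(\<integral>\<^sup>+\<omega>. ennreal (exp (- t * Y \<omega>)) \<partial>M) = ennreal (1 / (1 + t))"
proof -
  have "(\<integral>\<^sup>+\<omega>. ennreal (exp (- t * Y \<omega>)) \<partial>M) =
      (\<integral>\<^sup>+x. ennreal (exponential_density 1 x) * ennreal (exp (- t * x)) \<partial>lborel)"
    by (rule distributed_nn_integral[OF Y, symmetric]) measurable
  also have "\<dots> = (\<integral>\<^sup>+x. ennreal (1 / (1 + t)) * ennreal (exponential_density (1 + t) x) \<partial>lborel)"
  proof (intro nn_integral_cong)
    fix x :: real
    have "exp (- x) * exp (- t * x) = 1 / (1 + t) * ((1 + t) * exp (- x * (1 + t)))"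
      using t by (simp add: exp_add[symmetric] field_simps add_pos_nonneg)
    then show "ennreal (exponential_density 1 x) * ennreal (exp (- t * x)) =
        ennreal (1 / (1 + t)) * ennreal (exponential_density (1 + t) x)"
      using t by (simp add: exponential_density_def ennreal_mult'[symmetric] del: ennreal_mult')
  qed
  also have "\<dots> = ennreal (1 / (1 + t)) * emeasure (density lborel (exponential_density (1 + t))) UNIV"
    by (simp add: nn_integral_cmult emeasure_density)
  also have "emeasure (density lborel (exponential_density (1 + t))) UNIV = 1"
    using prob_space.emeasure_space_1[OF prob_space_exponential_density, of "1 + t"] t by simp
  finally show ?thesis by simp
qed

lemma (in prob_space) indep_var_nn_integral:
  fixes X1 X2 :: "'a \<Rightarrow> real"
  assumes indep: "indep_var borel X1 borel X2"
    and nonneg: "\<And>\<omega>. 0 \<le> X1 \<omega>" "\<And>\<omega>. 0 \<le> X2 \<omega>"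
  shows "(\<integral>\<^sup>+\<omega>. ennreal (X1 \<omega> * X2 \<omega>) \<partial>M) = (\<integral>\<^sup>+\<omega>. ennreal (X1 \<omega>) \<partial>M) * (\<integral>\<^sup>+\<omega>. ennreal (X2 \<omega>) \<partial>M)"
proof -
  have borel_eq: "(\<lambda>_. borel) = case_bool borel borel"
    by (rule ext) (simp split: bool.split)
  have "indep_vars (\<lambda>_. borel) (case_bool X1 X2) UNIV"
    using indep unfolding indep_var_def by (subst borel_eq)
  then have "indep_vars (\<lambda>_. borel) (\<lambda>b \<omega>. ennreal (case_bool X1 X2 b \<omega>)) UNIV"
    by (rule indep_vars_compose2) measurable
  then have "(\<integral>\<^sup>+\<omega>. (\<Prod>b\<in>UNIV. ennreal (case_bool X1 X2 b \<omega>)) \<partial>M)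
      = (\<Prod>b\<in>UNIV. \<integral>\<^sup>+\<omega>. ennreal (case_bool X1 X2 b \<omega>) \<partial>M)"
    by (intro indep_vars_nn_integral) auto
  then show ?thesis
    using nonneg by (simp add: UNIV_bool ennreal_mult' mult.commute)
qed

locale jump_chain = prob_space M for M :: "'w measure" +
  fixes X :: "nat \<Rightarrow> 'w \<Rightarrow> nat" and E :: "nat \<Rightarrow> 'w \<Rightarrow> real"
    and p :: "nat \<Rightarrow> nat \<Rightarrow> real" and n0 :: nat
  assumes measurable_X: "\<And>k. X k \<in> M \<rightarrow>\<^sub>M count_space UNIV"
    and measurable_E: "\<And>k. E k \<in> borel_measurable M"
    and prob_path: "\<And>k xs. length xs = Suc k \<Longrightarrow>
        measure M {\<omega> \<in> space M. \<forall>i\<le>k. X i \<omega> = xs ! i} =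
          (if xs ! 0 = n0 then 1 else 0) * (\<Prod>i<k. p (xs ! i) (xs ! Suc i))"
    and exponential_E: "\<And>k. distributed M lborel (E k) (\<lambda>x. ennreal (exponential_density 1 x))"
    and indep_E: "indep_vars (\<lambda>_. borel) E UNIV"
    \<comment> \<open>the path is real-valued here because coercion inference made it so in \<open>bc_realization\<close>\<close>
    and indep_X_E: "indep_var (PiM UNIV (\<lambda>_. count_space (UNIV::real set))) (\<lambda>\<omega> k. real (X k \<omega>))
                           (PiM UNIV (\<lambda>_. borel)) (\<lambda>\<omega> k. E k \<omega>)"
    and p_nonneg: "\<And>x y. 0 \<le> p x y"
begin

definition history :: "nat \<Rightarrow> 'w \<Rightarrow> nat list" where
  "history k \<omega> = map (\<lambda>i. X i \<omega>) [0..<Suc k]"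

lemma length_history [simp]: "length (history k \<omega>) = Suc k"
  by (simp add: history_def)

lemma history_nth: "j \<le> k \<Longrightarrow> history k \<omega> ! j = X j \<omega>"
  unfolding history_def by (simp del: upt_Suc add: nth_map_upt)

lemma history_Suc: "history (Suc k) \<omega> = history k \<omega> @ [X (Suc k) \<omega>]"
  by (simp add: history_def)

lemma history_eq_iff: "length xs = Suc k \<Longrightarrow> history k \<omega> = xs \<longleftrightarrow> (\<forall>i\<le>k. X i \<omega> = xs ! i)"
  by (auto simp: history_def list_eq_iff_nth_eq less_Suc_eq_le simp del: upt_Suc)

lemma measurable_history [measurable]: "history k \<in> M \<rightarrow>\<^sub>M count_space UNIV"
proof (subst measurable_count_space_eq2_countable, intro conjI ballI)
  fix xs :: "nat list"
  have "history k -` {xs} \<inter> space M =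
      (if length xs = Suc k then (\<Inter>i\<le>k. X i -` {xs ! i} \<inter> space M) else {})"
    by (auto simp: history_eq_iff history_nth)
  moreover have "(\<Inter>i\<le>k. X i -` {xs ! i} \<inter> space M) \<in> sets M"
    by (intro sets.finite_INT measurable_sets[OF measurable_X]) auto
  ultimately show "history k -` {xs} \<inter> space M \<in> sets M"
    by simp
qed simp

lemma sets_history [measurable]: "{\<omega>\<in>space M. history k \<omega> = xs} \<in> sets M"
proof -
  have "{\<omega>\<in>space M. history k \<omega> = xs} = history k -` {xs} \<inter> space M" by auto
  then show ?thesis using measurable_sets[OF measurable_history] by simp
qed

lemma sets_X_eq [measurable]: "{\<omega>\<in>space M. X k \<omega> = y} \<in> sets M"
proof -
  have "{\<omega>\<in>space M. X k \<omega> = y} = X k -` {y} \<inter> space M" by auto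
  then show ?thesis using measurable_sets[OF measurable_X] by simp
qed

lemmas [measurable] = measurable_X measurable_E

lemma prob_history:
  "length xs = Suc k \<Longrightarrow> prob {\<omega>\<in>space M. history k \<omega> = xs} =
     (if xs ! 0 = n0 then 1 else 0) * (\<Prod>i<k. p (xs ! i) (xs ! Suc i))"
  using prob_path by (simp add: history_eq_iff)

lemma prob_history_snoc:
  assumes "length xs = Suc k"
  shows "prob {\<omega>\<in>space M. history (Suc k) \<omega> = xs @ [y]} =
    prob {\<omega>\<in>space M. history k \<omega> = xs} * p (xs ! k) y"
  using assms by (simp add: prob_history nth_append)

lemma AE_X_0: "AE \<omega> in M. X 0 \<omega> = n0"
  using prob_path[of "[n0]" 0] by (subst prob_Collect_eq_1[symmetric]) auto

lemma nn_integral_mono_history: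
  assumes f: "f \<in> borel_measurable M" and g: "g \<in> borel_measurable M"
    and le: "\<And>xs. length xs = Suc k \<Longrightarrow>
      (\<integral>\<^sup>+\<omega>. f \<omega> * indicator {\<omega>\<in>space M. history k \<omega> = xs} \<omega> \<partial>M)
        \<le> (\<integral>\<^sup>+\<omega>. g \<omega> * indicator {\<omega>\<in>space M. history k \<omega> = xs} \<omega> \<partial>M)"
  shows "(\<integral>\<^sup>+\<omega>. f \<omega> \<partial>M) \<le> (\<integral>\<^sup>+\<omega>. g \<omega> \<partial>M)"
proof -
  let ?U = "\<lambda>\<omega>. to_nat (history k \<omega>)"
  have U: "?U \<in> M \<rightarrow>\<^sub>M count_space UNIV"
    by (rule measurable_compose[OF measurable_history]) simp
  have "(\<integral>\<^sup>+\<omega>. f \<omega> \<partial>M) = (\<Sum>i. \<integral>\<^sup>+\<omega>. f \<omega> * indicator {\<omega>\<in>space M. ?U \<omega> = i} \<omega> \<partial>M)"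
    by (rule nn_integral_split_by_value[OF U f])
  also have "\<dots> \<le> (\<Sum>i. \<integral>\<^sup>+\<omega>. g \<omega> * indicator {\<omega>\<in>space M. ?U \<omega> = i} \<omega> \<partial>M)"
  proof (intro suminf_le allI)
    fix i
    show "(\<integral>\<^sup>+\<omega>. f \<omega> * indicator {\<omega>\<in>space M. ?U \<omega> = i} \<omega> \<partial>M)
        \<le> (\<integral>\<^sup>+\<omega>. g \<omega> * indicator {\<omega>\<in>space M. ?U \<omega> = i} \<omega> \<partial>M)"
    proof (cases "\<exists>xs :: nat list. i = to_nat xs \<and> length xs = Suc k")
      case True
      then obtain xs :: "nat list" where "i = to_nat xs" "length xs = Suc k" by blast
      moreover from this have "{\<omega>\<in>space M. ?U \<omega> = i} = {\<omega>\<in>space M. history k \<omega> = xs}"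
        by auto
      ultimately show ?thesis using le by simp
    next
      case False
      then have "{\<omega>\<in>space M. ?U \<omega> = i} = {}" by auto
      then show ?thesis by simp
    qed
  qed auto
  also have "\<dots> = (\<integral>\<^sup>+\<omega>. g \<omega> \<partial>M)"
    by (rule nn_integral_split_by_value[OF U g, symmetric])
  finally show ?thesis .
qed

lemma nn_integral_eq_history:
  assumes f: "f \<in> borel_measurable M" and g: "g \<in> borel_measurable M"
    and eq: "\<And>xs. length xs = Suc k \<Longrightarrow>
      (\<integral>\<^sup>+\<omega>. f \<omega> * indicator {\<omega>\<in>space M. history k \<omega> = xs} \<omega> \<partial>M)
        = (\<integral>\<^sup>+\<omega>. g \<omega> * indicator {\<omega>\<in>space M. history k \<omega> = xs} \<omega> \<partial>M)"
  shows "(\<integral>\<^sup>+\<omega>. f \<omega> \<partial>M) = (\<integral>\<^sup>+\<omega>. g \<omega> \<partial>M)"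
proof (rule antisym)
  show "(\<integral>\<^sup>+\<omega>. f \<omega> \<partial>M) \<le> (\<integral>\<^sup>+\<omega>. g \<omega> \<partial>M)"
    by (rule nn_integral_mono_history[where k=k, OF f g]) (simp add: eq)
  show "(\<integral>\<^sup>+\<omega>. g \<omega> \<partial>M) \<le> (\<integral>\<^sup>+\<omega>. f \<omega> \<partial>M)"
    by (rule nn_integral_mono_history[where k=k, OF g f]) (simp add: eq)
qed

lemma nn_integral_indicator_history_cong:
  assumes fg: "\<And>\<omega>. \<omega> \<in> space M \<Longrightarrow> (\<And>j. j \<le> k \<Longrightarrow> X j \<omega> = xs ! j) \<Longrightarrow> f \<omega> = g \<omega>"
  shows "(\<integral>\<^sup>+\<omega>. f \<omega> * indicator {\<omega>\<in>space M. history k \<omega> = xs} \<omega> \<partial>M)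
    = (\<integral>\<^sup>+\<omega>. g \<omega> * indicator {\<omega>\<in>space M. history k \<omega> = xs} \<omega> \<partial>M)"
proof (intro nn_integral_cong)
  fix \<omega> assume \<omega>: "\<omega> \<in> space M"
  show "f \<omega> * indicator {\<omega>\<in>space M. history k \<omega> = xs} \<omega>
      = g \<omega> * indicator {\<omega>\<in>space M. history k \<omega> = xs} \<omega>"
  proof (cases "history k \<omega> = xs")
    case True
    then have "f \<omega> = g \<omega>" using fg[OF \<omega>] history_nth by metis
    then show ?thesis by simp
  qed simp
qed

lemma nn_integral_next_state:
  fixes W :: "nat \<Rightarrow> real"
  assumes len: "length xs = Suc k" and W_nonneg: "\<And>x. 0 \<le> W x"
  shows "(\<integral>\<^sup>+\<omega>. ennreal (W (X (Suc k) \<omega>)) * indicator {\<omega>\<in>space M. history k \<omega> = xs} \<omega> \<partial>M) =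
    ennreal (prob {\<omega>\<in>space M. history k \<omega> = xs}) * (\<Sum>y. ennreal (p (xs ! k) y) * ennreal (W y))"
proof -
  let ?A = "{\<omega>\<in>space M. history k \<omega> = xs}"
  let ?B = "\<lambda>y. {\<omega>\<in>space M. history (Suc k) \<omega> = xs @ [y]}"
  have "(\<integral>\<^sup>+\<omega>. ennreal (W (X (Suc k) \<omega>)) * indicator ?A \<omega> \<partial>M) =
      (\<Sum>y. \<integral>\<^sup>+\<omega>. ennreal (W (X (Suc k) \<omega>)) * indicator ?A \<omega> * indicator {\<omega>\<in>space M. X (Suc k) \<omega> = y} \<omega> \<partial>M)"
    by (rule nn_integral_split_by_value[OF measurable_X]) measurable
  also have "\<dots> = (\<Sum>y. \<integral>\<^sup>+\<omega>. ennreal (W y) * indicator (?B y) \<omega> \<partial>M)"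
    by (intro suminf_cong nn_integral_cong) (auto simp: history_Suc indicator_def)
  also have "\<dots> = (\<Sum>y. ennreal (prob ?A) * (ennreal (p (xs ! k) y) * ennreal (W y)))"
    using len p_nonneg
    by (simp add: nn_integral_cmult_indicator emeasure_eq_measure prob_history_snoc ennreal_mult' mult_ac)
  also have "\<dots> = ennreal (prob ?A) * (\<Sum>y. ennreal (p (xs ! k) y) * ennreal (W y))"
    by (rule ennreal_suminf_cmult)
  finally show ?thesis .
qed

lemma nn_integral_discounted_step:
  fixes W \<rho> :: "nat \<Rightarrow> real"
  assumes W_nonneg: "\<And>x. 0 \<le> W x" and \<rho>_nonneg: "\<And>x. 0 \<le> \<rho> x"
    and superharmonic: "\<And>x. ennreal (\<rho> x) * (\<Sum>y. ennreal (p x y) * ennreal (W y)) \<le> ennreal (W x)"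
  shows "(\<integral>\<^sup>+\<omega>. ennreal ((\<Prod>j<Suc k. \<rho> (X j \<omega>)) * W (X (Suc k) \<omega>)) \<partial>M)
      \<le> (\<integral>\<^sup>+\<omega>. ennreal ((\<Prod>j<k. \<rho> (X j \<omega>)) * W (X k \<omega>)) \<partial>M)"
proof (rule nn_integral_mono_history[where k=k])
  fix xs :: "nat list" assume len: "length xs = Suc k"
  let ?A = "{\<omega>\<in>space M. history k \<omega> = xs}"
  let ?P = "\<lambda>k. \<Prod>j<k. \<rho> (xs ! j)"
  have P_nonneg: "0 \<le> ?P k" for k by (simp add: prod_nonneg \<rho>_nonneg)
  have "(\<integral>\<^sup>+\<omega>. ennreal ((\<Prod>j<Suc k. \<rho> (X j \<omega>)) * W (X (Suc k) \<omega>)) * indicator ?A \<omega> \<partial>M)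
      = (\<integral>\<^sup>+\<omega>. ennreal (?P (Suc k)) * ennreal (W (X (Suc k) \<omega>)) * indicator ?A \<omega> \<partial>M)"
  proof (rule nn_integral_indicator_history_cong)
    fix \<omega> assume "\<And>j. j \<le> k \<Longrightarrow> X j \<omega> = xs ! j"
    then have "(\<Prod>j<Suc k. \<rho> (X j \<omega>)) = ?P (Suc k)" by (intro prod.cong) auto
    then show "ennreal ((\<Prod>j<Suc k. \<rho> (X j \<omega>)) * W (X (Suc k) \<omega>))
        = ennreal (?P (Suc k)) * ennreal (W (X (Suc k) \<omega>))"
      using ennreal_mult'[OF P_nonneg] by presburger
  qed
  also have "\<dots> = ennreal (?P (Suc k)) * (ennreal (prob ?A) * (\<Sum>y. ennreal (p (xs ! k) y) * ennreal (W y)))"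
    unfolding nn_integral_next_state[OF len W_nonneg, symmetric]
    by (simp add: mult.assoc nn_integral_cmult)
  also have "\<dots> = ennreal (?P k) * ennreal (prob ?A) * (ennreal (\<rho> (xs ! k)) * (\<Sum>y. ennreal (p (xs ! k) y) * ennreal (W y)))"
    by (simp add: ennreal_mult' P_nonneg \<rho>_nonneg mult_ac)
  also have "\<dots> \<le> ennreal (?P k) * ennreal (prob ?A) * ennreal (W (xs ! k))"
    by (intro mult_left_mono superharmonic) auto
  also have "\<dots> = (\<integral>\<^sup>+\<omega>. ennreal (?P k * W (xs ! k)) * indicator ?A \<omega> \<partial>M)"
    by (subst nn_integral_cmult_indicator)
      (auto simp: emeasure_eq_measure ennreal_mult' P_nonneg W_nonneg mult_ac)
  also have "\<dots> = (\<integral>\<^sup>+\<omega>. ennreal ((\<Prod>j<k. \<rho> (X j \<omega>)) * W (X k \<omega>)) * indicator ?A \<omega> \<partial>M)"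
  proof (rule nn_integral_indicator_history_cong)
    fix \<omega> assume "\<And>j. j \<le> k \<Longrightarrow> X j \<omega> = xs ! j"
    then have "(\<Prod>j<k. \<rho> (X j \<omega>)) = ?P k" "X k \<omega> = xs ! k" by (auto intro: prod.cong)
    then show "ennreal (?P k * W (xs ! k)) = ennreal ((\<Prod>j<k. \<rho> (X j \<omega>)) * W (X k \<omega>))"
      by simp
  qed
  finally show "(\<integral>\<^sup>+\<omega>. ennreal ((\<Prod>j<Suc k. \<rho> (X j \<omega>)) * W (X (Suc k) \<omega>)) * indicator ?A \<omega> \<partial>M)
      \<le> (\<integral>\<^sup>+\<omega>. ennreal ((\<Prod>j<k. \<rho> (X j \<omega>)) * W (X k \<omega>)) * indicator ?A \<omega> \<partial>M)" .
qed measurable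

lemma nn_integral_discounted_le:
  fixes W \<rho> :: "nat \<Rightarrow> real"
  assumes W_nonneg: "\<And>x. 0 \<le> W x" and \<rho>_nonneg: "\<And>x. 0 \<le> \<rho> x"
    and superharmonic: "\<And>x. ennreal (\<rho> x) * (\<Sum>y. ennreal (p x y) * ennreal (W y)) \<le> ennreal (W x)"
  shows "(\<integral>\<^sup>+\<omega>. ennreal ((\<Prod>j<k. \<rho> (X j \<omega>)) * W (X k \<omega>)) \<partial>M) \<le> ennreal (W n0)"
proof (induction k)
  case 0
  have "(\<integral>\<^sup>+\<omega>. ennreal (W (X 0 \<omega>)) \<partial>M) = (\<integral>\<^sup>+\<omega>. ennreal (W n0) \<partial>M)"
    using AE_X_0 by (intro nn_integral_cong_AE) auto
  then show ?case by (simp add: emeasure_space_1)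
next
  case (Suc k)
  with nn_integral_discounted_step[OF assms, of k] show ?case by (rule order_trans)
qed

lemma nn_integral_prod_exp_holding_times:
  fixes t :: "nat \<Rightarrow> real"
  assumes t_nonneg: "\<And>j. 0 \<le> t j"
  shows "(\<integral>\<^sup>+\<omega>. ennreal (\<Prod>j<k. exp (- t j * E j \<omega>)) \<partial>M) = ennreal (\<Prod>j<k. 1 / (1 + t j))"
proof -
  have "(\<integral>\<^sup>+\<omega>. ennreal (\<Prod>j<k. exp (- t j * E j \<omega>)) \<partial>M) = (\<integral>\<^sup>+\<omega>. (\<Prod>j<k. ennreal (exp (- t j * E j \<omega>))) \<partial>M)"
    by (simp add: prod_ennreal)
  also have "\<dots> = (\<Prod>j<k. \<integral>\<^sup>+\<omega>. ennreal (exp (- t j * E j \<omega>)) \<partial>M)"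
  proof (rule indep_vars_nn_integral)
    show "indep_vars (\<lambda>_. borel) (\<lambda>j \<omega>. ennreal (exp (- t j * E j \<omega>))) {..<k}"
      by (intro indep_vars_compose2[OF indep_vars_subset[OF indep_E]]) measurable
  qed auto
  also have "\<dots> = (\<Prod>j<k. ennreal (1 / (1 + t j)))"
    using t_nonneg by (intro prod.cong refl nn_integral_exp_exponential[OF exponential_E])
  also have "\<dots> = ennreal (\<Prod>j<k. 1 / (1 + t j))"
    using t_nonneg by (intro prod_ennreal) (simp add: add_nonneg_nonneg)
  finally show ?thesis .
qed

lemma nn_integral_indicator_history_holding_times:
  fixes t :: "nat \<Rightarrow> real"
  assumes len: "length xs = Suc k" and t_nonneg: "\<And>j. 0 \<le> t j"
  shows "(\<integral>\<^sup>+\<omega>. ennreal (\<Prod>j<k. exp (- t j * E j \<omega>)) * indicator {\<omega>\<in>space M. history k \<omega> = xs} \<omega> \<partial>M) =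
    emeasure M {\<omega>\<in>space M. history k \<omega> = xs} * ennreal (\<Prod>j<k. 1 / (1 + t j))"
proof -
  let ?A = "{\<omega>\<in>space M. history k \<omega> = xs}"
  \<comment> \<open>the history event as a function of the real-valued path, to which \<open>indep_X_E\<close> applies\<close>
  define Y1 :: "(nat \<Rightarrow> real) \<Rightarrow> real" where "Y1 x = (\<Prod>i\<le>k. indicator {real (xs ! i)} (x i))" for x
  define Y2 :: "(nat \<Rightarrow> real) \<Rightarrow> real" where "Y2 e = (\<Prod>j<k. exp (- t j * e j))" for e
  have Y1_eq: "Y1 (\<lambda>i. real (X i \<omega>)) = indicator ?A \<omega>" if "\<omega> \<in> space M" for \<omega>
    using that len by (auto simp: Y1_def history_eq_iff indicator_def prod_zero_iff)
  have "indep_var borel (Y1 \<circ> (\<lambda>\<omega> i. real (X i \<omega>))) borel (Y2 \<circ> (\<lambda>\<omega> j. E j \<omega>))"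
  proof (rule indep_var_compose[OF indep_X_E])
    show "Y1 \<in> borel_measurable (PiM UNIV (\<lambda>_. count_space (UNIV::real set)))"
      unfolding Y1_def
      by (intro borel_measurable_prod measurable_compose[OF measurable_component_singleton]) auto
    show "Y2 \<in> borel_measurable (PiM UNIV (\<lambda>_. borel))"
      unfolding Y2_def by measurable
  qed
  then have "(\<integral>\<^sup>+\<omega>. ennreal (Y1 (\<lambda>i. real (X i \<omega>)) * Y2 (\<lambda>j. E j \<omega>)) \<partial>M)
      = (\<integral>\<^sup>+\<omega>. ennreal (Y1 (\<lambda>i. real (X i \<omega>))) \<partial>M) * (\<integral>\<^sup>+\<omega>. ennreal (Y2 (\<lambda>j. E j \<omega>)) \<partial>M)"
    unfolding comp_def by (rule indep_var_nn_integral) (auto simp: Y1_def Y2_def prod_nonneg)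
  moreover have "(\<integral>\<^sup>+\<omega>. ennreal (Y1 (\<lambda>i. real (X i \<omega>))) \<partial>M) = emeasure M ?A"
  proof -
    have "(\<integral>\<^sup>+\<omega>. ennreal (Y1 (\<lambda>i. real (X i \<omega>))) \<partial>M) = (\<integral>\<^sup>+\<omega>. indicator ?A \<omega> \<partial>M)"
      by (intro nn_integral_cong) (simp add: Y1_eq indicator_def)
    also have "\<dots> = emeasure M ?A"
      by (rule nn_integral_indicator) (rule sets_history)
    finally show ?thesis .
  qed
  moreover have "(\<integral>\<^sup>+\<omega>. ennreal (\<Prod>j<k. exp (- t j * E j \<omega>)) * indicator ?A \<omega> \<partial>M)
      = (\<integral>\<^sup>+\<omega>. ennreal (Y1 (\<lambda>i. real (X i \<omega>)) * Y2 (\<lambda>j. E j \<omega>)) \<partial>M)"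
    by (intro nn_integral_cong) (simp add: Y1_eq Y2_def indicator_def)
  moreover have "(\<integral>\<^sup>+\<omega>. ennreal (Y2 (\<lambda>j. E j \<omega>)) \<partial>M) = ennreal (\<Prod>j<k. 1 / (1 + t j))"
    unfolding Y2_def by (rule nn_integral_prod_exp_holding_times[OF t_nonneg])
  ultimately show ?thesis by simp
qed

lemma nn_integral_holding_time_discount:
  fixes F :: "nat list \<Rightarrow> real" and q :: "nat \<Rightarrow> real" and s :: real
  assumes F_nonneg: "\<And>xs. 0 \<le> F xs" and s: "0 \<le> s" and q_nonneg: "\<And>x. 0 \<le> q x"
  shows "(\<integral>\<^sup>+\<omega>. ennreal (F (history k \<omega>) * (\<Prod>j<k. exp (- (s / q (X j \<omega>)) * E j \<omega>))) \<partial>M)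
    = (\<integral>\<^sup>+\<omega>. ennreal (F (history k \<omega>) * (\<Prod>j<k. 1 / (1 + s / q (X j \<omega>)))) \<partial>M)"
proof (rule nn_integral_eq_history[where k=k])
  fix xs :: "nat list" assume len: "length xs = Suc k"
  let ?A = "{\<omega>\<in>space M. history k \<omega> = xs}"
  let ?t = "\<lambda>j. s / q (xs ! j)"
  have t_nonneg: "0 \<le> ?t j" for j using s q_nonneg by simp
  have D_nonneg: "0 \<le> (\<Prod>j<k. 1 / (1 + ?t j))" using t_nonneg by (intro prod_nonneg) auto
  have "(\<integral>\<^sup>+\<omega>. ennreal (F (history k \<omega>) * (\<Prod>j<k. exp (- (s / q (X j \<omega>)) * E j \<omega>))) * indicator ?A \<omega> \<partial>M)
      = (\<integral>\<^sup>+\<omega>. ennreal (F xs) * ennreal (\<Prod>j<k. exp (- ?t j * E j \<omega>)) * indicator ?A \<omega> \<partial>M)"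
  proof (rule nn_integral_indicator_history_cong)
    fix \<omega> assume "\<omega> \<in> space M" and X: "\<And>j. j \<le> k \<Longrightarrow> X j \<omega> = xs ! j"
    then have "history k \<omega> = xs" using len by (simp add: history_eq_iff)
    moreover have "(\<Prod>j<k. exp (- (s / q (X j \<omega>)) * E j \<omega>)) = (\<Prod>j<k. exp (- ?t j * E j \<omega>))"
      using X by (auto intro: prod.cong)
    ultimately show "ennreal (F (history k \<omega>) * (\<Prod>j<k. exp (- (s / q (X j \<omega>)) * E j \<omega>)))
        = ennreal (F xs) * ennreal (\<Prod>j<k. exp (- ?t j * E j \<omega>))"
      by (simp add: ennreal_mult' F_nonneg)
  qed
  also have "\<dots> = ennreal (F xs) * (emeasure M ?A * ennreal (\<Prod>j<k. 1 / (1 + ?t j)))"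
    unfolding nn_integral_indicator_history_holding_times[OF len t_nonneg, symmetric] mult.assoc
    by (rule nn_integral_cmult) measurable
  also have "\<dots> = (\<integral>\<^sup>+\<omega>. ennreal (F xs * (\<Prod>j<k. 1 / (1 + ?t j))) * indicator ?A \<omega> \<partial>M)"
    by (subst nn_integral_cmult_indicator) (auto simp: ennreal_mult' F_nonneg D_nonneg mult_ac)
  also have "\<dots> = (\<integral>\<^sup>+\<omega>. ennreal (F (history k \<omega>) * (\<Prod>j<k. 1 / (1 + s / q (X j \<omega>)))) * indicator ?A \<omega> \<partial>M)"
  proof (rule nn_integral_indicator_history_cong)
    fix \<omega> assume "\<omega> \<in> space M" and X: "\<And>j. j \<le> k \<Longrightarrow> X j \<omega> = xs ! j"
    then have "history k \<omega> = xs" using len by (simp add: history_eq_iff)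
    moreover have "(\<Prod>j<k. 1 / (1 + s / q (X j \<omega>))) = (\<Prod>j<k. 1 / (1 + ?t j))"
      using X by (auto intro: prod.cong)
    ultimately show "ennreal (F xs * (\<Prod>j<k. 1 / (1 + ?t j)))
        = ennreal (F (history k \<omega>) * (\<Prod>j<k. 1 / (1 + s / q (X j \<omega>))))"
      by simp
  qed
  finally show "(\<integral>\<^sup>+\<omega>. ennreal (F (history k \<omega>) * (\<Prod>j<k. exp (- (s / q (X j \<omega>)) * E j \<omega>))) * indicator ?A \<omega> \<partial>M)
      = (\<integral>\<^sup>+\<omega>. ennreal (F (history k \<omega>) * (\<Prod>j<k. 1 / (1 + s / q (X j \<omega>)))) * indicator ?A \<omega> \<partial>M)" .
qed measurable

lemma nn_integral_discounted_weight_le: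
  fixes q W :: "nat \<Rightarrow> real" and c :: real
  assumes q_nonneg: "\<And>x. 0 \<le> q x" and c: "0 \<le> c" and W_nonneg: "\<And>x. 0 \<le> W x"
    and superharmonic: "\<And>x. ennreal (1 / (1 + c / q x)) * (\<Sum>y. ennreal (p x y) * ennreal (W y)) \<le> ennreal (W x)"
  shows "(\<integral>\<^sup>+\<omega>. ennreal ((\<Prod>j<k. exp (- (c / q (X j \<omega>)) * E j \<omega>)) * W (X k \<omega>)) \<partial>M) \<le> ennreal (W n0)"
proof -
  have "(\<integral>\<^sup>+\<omega>. ennreal ((\<Prod>j<k. exp (- (c / q (X j \<omega>)) * E j \<omega>)) * W (X k \<omega>)) \<partial>M)
      = (\<integral>\<^sup>+\<omega>. ennreal ((\<lambda>xs. W (xs ! k)) (history k \<omega>) * (\<Prod>j<k. exp (- (c / q (X j \<omega>)) * E j \<omega>))) \<partial>M)"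
    by (simp add: history_nth mult.commute)
  also have "\<dots> = (\<integral>\<^sup>+\<omega>. ennreal ((\<lambda>xs. W (xs ! k)) (history k \<omega>) * (\<Prod>j<k. 1 / (1 + c / q (X j \<omega>)))) \<partial>M)"
    using c q_nonneg W_nonneg by (intro nn_integral_holding_time_discount)
  also have "\<dots> = (\<integral>\<^sup>+\<omega>. ennreal ((\<Prod>j<k. 1 / (1 + c / q (X j \<omega>))) * W (X k \<omega>)) \<partial>M)"
    by (simp add: history_nth mult.commute)
  also have "\<dots> \<le> ennreal (W n0)"
    using c q_nonneg by (intro nn_integral_discounted_le[OF W_nonneg _ superharmonic]) auto
  finally show ?thesis .
qed

lemma nn_integral_compensated_weight:
  fixes q :: "nat \<Rightarrow> real"
  assumes q_nonneg: "\<And>x. 0 \<le> q x"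
  shows "(\<integral>\<^sup>+\<omega>. ennreal ((\<Prod>j<k. 1 + 1 / q (X j \<omega>)) * (\<Prod>j<k. exp (- (1 / q (X j \<omega>)) * E j \<omega>))) \<partial>M) = 1"
proof -
  have "(\<integral>\<^sup>+\<omega>. ennreal ((\<Prod>j<k. 1 + 1 / q (X j \<omega>)) * (\<Prod>j<k. exp (- (1 / q (X j \<omega>)) * E j \<omega>))) \<partial>M)
      = (\<integral>\<^sup>+\<omega>. ennreal ((\<lambda>xs. \<Prod>j<k. 1 + 1 / q (xs ! j)) (history k \<omega>) * (\<Prod>j<k. exp (- (1 / q (X j \<omega>)) * E j \<omega>))) \<partial>M)"
    by (simp add: history_nth)
  also have "\<dots> = (\<integral>\<^sup>+\<omega>. ennreal ((\<lambda>xs. \<Prod>j<k. 1 + 1 / q (xs ! j)) (history k \<omega>) * (\<Prod>j<k. 1 / (1 + 1 / q (X j \<omega>)))) \<partial>M)"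
    using q_nonneg by (intro nn_integral_holding_time_discount) (auto intro!: prod_nonneg add_nonneg_nonneg)
  also have "\<dots> = (\<integral>\<^sup>+\<omega>. 1 \<partial>M)"
  proof (intro nn_integral_cong)
    fix \<omega>
    have "(1 + 1 / q (X j \<omega>)) * (1 / (1 + 1 / q (X j \<omega>))) = 1" for j
    proof -
      have "0 < 1 + 1 / q (X j \<omega>)" using q_nonneg[of "X j \<omega>"] by (simp add: add_pos_nonneg)
      then show ?thesis by simp
    qed
    then show "ennreal ((\<lambda>xs. \<Prod>j<k. 1 + 1 / q (xs ! j)) (history k \<omega>) * (\<Prod>j<k. 1 / (1 + 1 / q (X j \<omega>)))) = 1"
      by (simp add: history_nth prod.distrib[symmetric])
  qed
  finally show ?thesis by (simp add: emeasure_space_1)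
qed

end

lemma one_plus_sum_le_prod_one_plus:
  fixes a :: "nat \<Rightarrow> real"
  assumes "\<And>j. 0 \<le> a j"
  shows "1 + (\<Sum>j<k. a j) \<le> (\<Prod>j<k. 1 + a j)"
proof (induction k)
  case (Suc k)
  have "1 + (\<Sum>j<Suc k. a j) \<le> (1 + (\<Sum>j<k. a j)) * (1 + a k)"
    using assms sum_nonneg[of "{..<k}" a] by (simp add: algebra_simps)
  also have "\<dots> \<le> (\<Prod>j<k. 1 + a j) * (1 + a k)"
    using Suc assms[of k] by (intro mult_right_mono) auto
  finally show ?case by simp
qed simp

lemma summable_inverse_imp_filterlim_at_top:
  fixes q :: "nat \<Rightarrow> real" and x :: "nat \<Rightarrow> nat"
  assumes q_pos: "\<And>k. 0 < q (x k)" and summable: "summable (\<lambda>k. 1 / q (x k))"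
  shows "filterlim x at_top sequentially"
  unfolding filterlim_at_top
proof
  fix N :: nat
  define Q where "Q = Max (insert 0 (q ` {..<N}))"
  have Q_ge: "n < N \<Longrightarrow> q n \<le> Q" and Q_nonneg: "0 \<le> Q" for n
    unfolding Q_def by (auto intro: Max_ge)
  have "eventually (\<lambda>k. 1 / q (x k) < 1 / (Q + 1)) sequentially"
    using summable_LIMSEQ_zero[OF summable] Q_nonneg by (intro order_tendstoD) auto
  then show "eventually (\<lambda>k. N \<le> x k) sequentially"
  proof (rule eventually_mono)
    fix k assume "1 / q (x k) < 1 / (Q + 1)"
    then have "Q < q (x k)" using q_pos[of k] Q_nonneg by (simp add: frac_less_eq field_simps)
    then show "N \<le> x k" using Q_ge[of "x k"] by (cases "x k < N") auto
  qed
qed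

lemma not_summable_imp_filterlim_sum_at_top:
  fixes f :: "nat \<Rightarrow> real"
  assumes f_nonneg: "\<And>k. 0 \<le> f k" and not_summable: "\<not> summable f"
  shows "filterlim (\<lambda>n. \<Sum>k<n. f k) at_top sequentially"
  unfolding filterlim_at_top
proof
  fix z :: real
  obtain n where n: "z < (\<Sum>k<n. f k)"
    using not_summable summableI_nonneg_bounded[of f z] f_nonneg by (meson not_le)
  have "(\<Sum>k<n. f k) \<le> (\<Sum>k<m. f k)" if "n \<le> m" for m
    using that f_nonneg by (intro sum_mono2) auto
  with n show "eventually (\<lambda>m. z \<le> (\<Sum>k<m. f k)) sequentially"
    unfolding eventually_sequentially by (meson less_le_trans less_imp_le)
qed

lemma summable_imp_prod_exp_lower_bound:
  fixes d e :: "nat \<Rightarrow> real"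
  assumes "summable (\<lambda>k. e k / d k)"
  obtains T where "\<And>a k. 0 \<le> a \<Longrightarrow> exp (- a * T) \<le> (\<Prod>j<k. exp (- (a / d j) * e j))"
proof -
  obtain T where T: "\<And>k. \<bar>\<Sum>j<k. e j / d j\<bar> \<le> T"
    using convergent_imp_Bseq[OF assms[unfolded summable_iff_convergent]] by (auto simp: Bseq_def)
  have "exp (- a * T) \<le> (\<Prod>j<k. exp (- (a / d j) * e j))" if a: "0 \<le> a" for a k
  proof -
    have "(\<Prod>j<k. exp (- (a / d j) * e j)) = exp (- a * (\<Sum>j<k. e j / d j))"
      by (simp add: exp_sum[symmetric] sum_distrib_left sum_negf)
    moreover have "- a * T \<le> - a * (\<Sum>j<k. e j / d j)"
      using T[of k] a by (intro mult_left_mono_neg) auto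
    ultimately show ?thesis by simp
  qed
  then show ?thesis by (rule that)
qed

lemma explosive_path_weight_at_top:
  fixes q W :: "nat \<Rightarrow> real" and x :: "nat \<Rightarrow> nat" and e :: "nat \<Rightarrow> real" and c :: real
  assumes q_pos: "\<And>k. 0 < q (x k)" and summable: "summable (\<lambda>k. e k / q (x k))"
    and W: "filterlim W at_top sequentially" and W_nonneg: "\<And>n. 0 \<le> W n" and c: "0 < c"
  shows "filterlim (\<lambda>k. (\<Prod>j<k. exp (- (c / q (x j)) * e j)) * W (x k)
     + (\<Prod>j<k. 1 + 1 / q (x j)) * (\<Prod>j<k. exp (- (1 / q (x j)) * e j))) at_top sequentially"
    (is "filterlim (\<lambda>k. ?A k + ?B k) at_top sequentially")
proof -
  obtain T where discount_ge: "\<And>a k. 0 \<le> a \<Longrightarrow> exp (- a * T) \<le> (\<Prod>j<k. exp (- (a / q (x j)) * e j))"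
    using summable_imp_prod_exp_lower_bound[OF summable] by blast
  have inv_q_nonneg: "0 \<le> 1 / q (x k)" for k using q_pos[of k] by simp
  have A_nonneg: "0 \<le> ?A k" and B_nonneg: "0 \<le> ?B k" for k
    using W_nonneg inv_q_nonneg by (auto intro!: mult_nonneg_nonneg prod_nonneg add_nonneg_nonneg)
  show ?thesis
  proof (cases "summable (\<lambda>k. 1 / q (x k))")
    case True
    have "filterlim (\<lambda>k. exp (- c * T) * W (x k)) at_top sequentially"
      using filterlim_compose[OF W summable_inverse_imp_filterlim_at_top[where q=q and x=x, OF q_pos True]]
      by (intro filterlim_tendsto_pos_mult_at_top[OF tendsto_const]) auto
    moreover have "eventually (\<lambda>k. exp (- c * T) * W (x k) \<le> ?A k + ?B k) sequentially"
    proof (intro always_eventually allI)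
      fix k
      show "exp (- c * T) * W (x k) \<le> ?A k + ?B k"
        using discount_ge[of c k] c W_nonneg[of "x k"] B_nonneg[of k]
        by (smt (verit) mult_right_mono)
    qed
    ultimately show ?thesis
      by (rule filterlim_at_top_mono)
  next
    case False
    have "filterlim (\<lambda>k. exp (- 1 * T) * (\<Sum>j<k. 1 / q (x j))) at_top sequentially"
      using not_summable_imp_filterlim_sum_at_top[OF inv_q_nonneg False]
      by (intro filterlim_tendsto_pos_mult_at_top[OF tendsto_const]) auto
    moreover have "eventually (\<lambda>k. exp (- 1 * T) * (\<Sum>j<k. 1 / q (x j)) \<le> ?A k + ?B k) sequentially"
    proof (intro always_eventually allI)
      fix k
      have "(\<Sum>j<k. 1 / q (x j)) \<le> (\<Prod>j<k. 1 + 1 / q (x j))"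
        using one_plus_sum_le_prod_one_plus[of "\<lambda>j. 1 / q (x j)" k] inv_q_nonneg by simp
      then have "exp (- 1 * T) * (\<Sum>j<k. 1 / q (x j)) \<le> ?B k"
        using discount_ge[of 1 k] inv_q_nonneg
        by (subst mult.commute, intro mult_mono) (auto intro: sum_nonneg prod_nonneg)
      then show "exp (- 1 * T) * (\<Sum>j<k. 1 / q (x j)) \<le> ?A k + ?B k"
        using A_nonneg[of k] by linarith
    qed
    ultimately show ?thesis
      by (rule filterlim_at_top_mono)
  qed
qed

lemma (in finite_measure) AE_liminf_neq_top:
  fixes Z :: "nat \<Rightarrow> 'a \<Rightarrow> ennreal"
  assumes Z: "\<And>k. Z k \<in> borel_measurable M" and bound: "\<And>k. integral\<^sup>N M (Z k) \<le> B" and "B < \<infinity>"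
  shows "AE \<omega> in M. liminf (\<lambda>k. Z k \<omega>) \<noteq> \<infinity>"
proof (rule nn_integral_PInf_AE)
  have "(\<integral>\<^sup>+\<omega>. liminf (\<lambda>k. Z k \<omega>) \<partial>M) \<le> liminf (\<lambda>k. integral\<^sup>N M (Z k))"
    by (rule nn_integral_liminf[OF Z])
  also have "\<dots> \<le> limsup (\<lambda>k. integral\<^sup>N M (Z k))"
    by (rule Liminf_le_Limsup) simp
  also have "\<dots> \<le> B"
    by (rule Limsup_bounded) (simp add: bound)
  finally show "(\<integral>\<^sup>+\<omega>. liminf (\<lambda>k. Z k \<omega>) \<partial>M) \<noteq> \<infinity>"
    using \<open>B < \<infinity>\<close> by (auto simp: top_unique)
qed (use Z in measurable)

theorem (in jump_chain) prob_explosion_eq_0: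
  fixes q W :: "nat \<Rightarrow> real" and c :: real
  assumes q_nonneg: "\<And>x. 0 \<le> q x" and c: "0 < c" and W_nonneg: "\<And>x. 0 \<le> W x"
    and W: "filterlim W at_top sequentially"
    and superharmonic: "\<And>x. ennreal (1 / (1 + c / q x)) * (\<Sum>y. ennreal (p x y) * ennreal (W y)) \<le> ennreal (W x)"
  shows "prob {\<omega>\<in>space M. (\<forall>k. 0 < q (X k \<omega>)) \<and> summable (\<lambda>k. E k \<omega> / q (X k \<omega>))} = 0"
proof -
  \<comment> \<open>the two weights of the header, with \<open>exp (- c * T k)\<close> written as a product over the jumps\<close>
  define A where "A k \<omega> = (\<Prod>j<k. exp (- (c / q (X j \<omega>)) * E j \<omega>)) * W (X k \<omega>)" for k \<omega>
  define B where "B k \<omega> = (\<Prod>j<k. 1 + 1 / q (X j \<omega>)) * (\<Prod>j<k. exp (- (1 / q (X j \<omega>)) * E j \<omega>))" for k \<omega>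
  define Z where "Z k \<omega> = ennreal (A k \<omega> + B k \<omega>)" for k \<omega>
  have A_nonneg: "0 \<le> A k \<omega>" and B_nonneg: "0 \<le> B k \<omega>" for k \<omega>
    unfolding A_def B_def using W_nonneg q_nonneg
    by (auto intro!: mult_nonneg_nonneg prod_nonneg add_nonneg_nonneg)
  have Z: "Z k \<in> borel_measurable M" for k unfolding Z_def A_def B_def by measurable
  have Z_bound: "integral\<^sup>N M (Z k) \<le> ennreal (W n0) + 1" for k
  proof -
    have "integral\<^sup>N M (Z k) = (\<integral>\<^sup>+\<omega>. ennreal (A k \<omega>) + ennreal (B k \<omega>) \<partial>M)"
      unfolding Z_def using A_nonneg B_nonneg by (intro nn_integral_cong ennreal_plus)
    also have "\<dots> = (\<integral>\<^sup>+\<omega>. ennreal (A k \<omega>) \<partial>M) + (\<integral>\<^sup>+\<omega>. ennreal (B k \<omega>) \<partial>M)"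
      unfolding A_def B_def by (rule nn_integral_add) measurable
    also have "\<dots> \<le> ennreal (W n0) + 1"
      using nn_integral_discounted_weight_le[OF q_nonneg _ W_nonneg superharmonic, where k=k]
        nn_integral_compensated_weight[where q=q and k=k, OF q_nonneg] c
      unfolding A_def B_def by (simp add: add_right_mono)
    finally show ?thesis .
  qed
  have "AE \<omega> in M. liminf (\<lambda>k. Z k \<omega>) \<noteq> \<infinity>"
    by (rule AE_liminf_neq_top[OF Z Z_bound]) simp
  moreover have "liminf (\<lambda>k. Z k \<omega>) = \<infinity>"
    if "\<forall>k. 0 < q (X k \<omega>)" and "summable (\<lambda>k. E k \<omega> / q (X k \<omega>))" for \<omega>
  proof -
    have "filterlim (\<lambda>k. Z k \<omega>) (nhds top) sequentially"
      unfolding Z_def A_def B_def ennreal_tendsto_top_eq_at_top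
      using that W_nonneg by (intro explosive_path_weight_at_top[OF _ _ W _ c]) auto
    then show ?thesis by (simp add: lim_imp_Liminf)
  qed
  ultimately show ?thesis
    by (intro prob_eq_0_AE) (auto elim: AE_mp)
qed

section \<open>Iterated logarithms\<close>

lemma ln_of_nat_nonneg: "0 \<le> ln (real n)"
  by (cases n) auto

lemma ln_ge_1_of_ge_3: "3 \<le> x \<Longrightarrow> 1 \<le> ln (x :: real)"
  using exp_le by (simp add: ln_ge_iff)

lemma ln_diff_le:
  fixes a b :: real
  assumes "0 < a" and "0 < b"
  shows "ln a - ln b \<le> (a - b) / b"
  using ln_le_minus_one[of "a / b"] assms by (simp add: ln_div diff_divide_distrib)

fun ln1p_iter :: "nat \<Rightarrow> real \<Rightarrow> real" where
  "ln1p_iter 0 y = y"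
| "ln1p_iter (Suc l) y = ln (1 + ln1p_iter l y)"

definition ln1p_iter_deriv :: "nat \<Rightarrow> real \<Rightarrow> real" where
  "ln1p_iter_deriv m y = (\<Prod>l<m. 1 / (1 + ln1p_iter l y))"

lemma ln1p_iter_nonneg: "0 \<le> y \<Longrightarrow> 0 \<le> ln1p_iter l y"
  by (induction l) auto

lemma ln1p_iter_deriv_nonneg: "0 \<le> y \<Longrightarrow> 0 \<le> ln1p_iter_deriv m y"
  unfolding ln1p_iter_deriv_def using ln1p_iter_nonneg by (intro prod_nonneg) (auto intro: add_nonneg_nonneg)

lemma ln1p_iter_deriv_Suc: "ln1p_iter_deriv (Suc m) y = ln1p_iter_deriv m y / (1 + ln1p_iter m y)"
  unfolding ln1p_iter_deriv_def by simp

lemma ln1p_iter_concave: "0 \<le> x \<Longrightarrow> 0 \<le> y \<Longrightarrow> ln1p_iter m y - ln1p_iter m x \<le> ln1p_iter_deriv m x * (y - x)"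
proof (induction m)
  case 0 then show ?case by (simp add: ln1p_iter_deriv_def)
next
  case (Suc m)
  have px: "0 < 1 + ln1p_iter m x" using ln1p_iter_nonneg[OF Suc.prems(1), of m] by simp
  have py: "0 < 1 + ln1p_iter m y" using ln1p_iter_nonneg[OF Suc.prems(2), of m] by simp
  have "ln1p_iter (Suc m) y - ln1p_iter (Suc m) x = ln (1 + ln1p_iter m y) - ln (1 + ln1p_iter m x)" by simp
  also have "\<dots> \<le> ((1 + ln1p_iter m y) - (1 + ln1p_iter m x)) / (1 + ln1p_iter m x)"
    by (rule ln_diff_le[OF py px])
  also have "\<dots> = (ln1p_iter m y - ln1p_iter m x) / (1 + ln1p_iter m x)" by simp
  also have "\<dots> \<le> (ln1p_iter_deriv m x * (y - x)) / (1 + ln1p_iter m x)"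
    using Suc px by (intro divide_right_mono) auto
  also have "\<dots> = ln1p_iter_deriv (Suc m) x * (y - x)" by (simp add: ln1p_iter_deriv_Suc)
  finally show ?case .
qed

lemma ln1p_iter_deriv_le_inverse: "1 \<le> m \<Longrightarrow> 0 \<le> y \<Longrightarrow> ln1p_iter_deriv m y \<le> 1 / (1 + y)"
proof (induction m rule: dec_induct)
  case base then show ?case by (simp add: ln1p_iter_deriv_def)
next
  case (step m)
  have "ln1p_iter_deriv (Suc m) y = ln1p_iter_deriv m y / (1 + ln1p_iter m y)" by (rule ln1p_iter_deriv_Suc)
  also have "\<dots> \<le> ln1p_iter_deriv m y"
    using ln1p_iter_deriv_nonneg[OF step.prems] ln1p_iter_nonneg[OF step.prems, of m]
    by (simp add: divide_le_eq_1 field_simps mult_le_cancel_left1)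
  finally show ?case using step by simp
qed

lemma ln1p_iter_at_top: "filterlim (ln1p_iter m) at_top at_top"
proof (induction m)
  case 0 then show ?case by (simp add: filterlim_ident)
next
  case (Suc m)
  have "filterlim (\<lambda>y. 1 + ln1p_iter m y) at_top at_top"
    by (rule filterlim_tendsto_add_at_top[OF tendsto_const Suc])
  then have "filterlim (\<lambda>y. ln (1 + ln1p_iter m y)) at_top at_top"
    by (rule filterlim_compose[OF ln_at_top])
  then show ?case by simp
qed

lemma iter_ln_le_ln1p_iter:
  fixes x :: real
  assumes "\<forall>j\<in>{1..Suc l}. 0 < (ln ^^ j) x"
  shows "(ln ^^ (Suc l)) x \<le> ln1p_iter l (ln x)"
  using assms
proof (induction l)
  case 0 then show ?case by simp
next
  case (Suc l)
  have pos: "0 < (ln ^^ (Suc l)) x" using bspec[OF Suc.prems, of "Suc l"] by (simp del: funpow.simps)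
  have IH: "(ln ^^ (Suc l)) x \<le> ln1p_iter l (ln x)" using Suc by auto
  have "(ln ^^ (Suc (Suc l))) x = ln ((ln ^^ (Suc l)) x)" by simp
  also have "\<dots> \<le> ln (ln1p_iter l (ln x))" using pos IH by simp
  also have "\<dots> \<le> ln (1 + ln1p_iter l (ln x))" using pos IH by simp
  finally show ?case by simp
qed

lemma ln1p_iter_deriv_mult_iter_ln_le_1:
  fixes x :: real
  assumes "\<forall>j\<in>{1..m}. 0 < (ln ^^ j) x"
  shows "ln1p_iter_deriv m (ln x) * (\<Prod>l<m. (ln ^^ (Suc l)) x) \<le> 1"
proof -
  have "ln1p_iter_deriv m (ln x) * (\<Prod>l<m. (ln ^^ (Suc l)) x) = (\<Prod>l<m. (ln ^^ (Suc l)) x / (1 + ln1p_iter l (ln x)))"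
    unfolding ln1p_iter_deriv_def by (simp add: prod.distrib[symmetric])
  also have "\<dots> \<le> 1"
  proof (intro prod_le_1 conjI)
    fix l assume l: "l \<in> {..<m}"
    have pos: "0 < (ln ^^ (Suc l)) x" using bspec[OF assms, of "Suc l"] l by (simp del: funpow.simps)
    have le: "(ln ^^ (Suc l)) x \<le> ln1p_iter l (ln x)" using assms l by (intro iter_ln_le_ln1p_iter) auto
    show "0 \<le> (ln ^^ (Suc l)) x / (1 + ln1p_iter l (ln x))" using pos le by simp
    show "(ln ^^ (Suc l)) x / (1 + ln1p_iter l (ln x)) \<le> 1" using pos le by simp
  qed
  finally show ?thesis .
qed

lemma filterlim_iter_ln_at_top: "filterlim (ln ^^ j) at_top (at_top :: real filter)"
proof (induction j)
  case 0 then show ?case by (simp add: filterlim_ident)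
next
  case (Suc j)
  have "filterlim (\<lambda>x. ln ((ln ^^ j) x)) at_top (at_top :: real filter)"
    by (rule filterlim_compose[OF ln_at_top Suc])
  then show ?case by (simp add: o_def)
qed

lemma eventually_iter_ln_pos: "eventually (\<lambda>n::nat. \<forall>j\<le>m. 0 < (ln ^^ j) (real n)) sequentially"
proof -
  have "eventually (\<lambda>n::nat. 0 < (ln ^^ j) (real n)) sequentially" for j
  proof -
    have "filterlim (\<lambda>n::nat. (ln ^^ j) (real n)) at_top sequentially"
      by (rule filterlim_compose[OF filterlim_iter_ln_at_top filterlim_real_sequentially])
    then show ?thesis by (simp add: filterlim_at_top_dense)
  qed
  then have "eventually (\<lambda>n::nat. \<forall>j\<in>{..m}. 0 < (ln ^^ j) (real n)) sequentially"
    by (intro eventually_ball_finite) auto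
  then show ?thesis by (rule eventually_mono) auto
qed

section \<open>Tail estimates for the splitting measure\<close>

lemma ln_one_plus_le_two_sqrt:
  fixes t :: real assumes t: "0 \<le> t"
  shows "ln (1 + t) \<le> 2 * sqrt t"
proof -
  have "1 + t \<le> (1 + sqrt t)^2" using t by (simp add: power2_eq_square algebra_simps)
  moreover have "0 < 1 + t" using t by simp
  ultimately have "ln (1 + t) \<le> ln ((1 + sqrt t)^2)" by (subst ln_le_cancel_iff) auto
  also have "\<dots> = 2 * ln (1 + sqrt t)" using t by (simp add: ln_realpow)
  also have "\<dots> \<le> 2 * sqrt t" using t by (simp add: ln_add_one_self_le_self)
  finally show ?thesis .
qed

lemma ln_one_plus_mult_ln_le:
  fixes t :: real assumes t: "1 \<le> t"
  shows "ln (1 + t) * ln t \<le> 8 * sqrt t"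
proof -
  define u where "u = ln t"
  have u0: "0 \<le> u" using t by (simp add: u_def)
  have "sqrt t = exp (u / 2)"
    using t by (simp add: u_def powr_half_sqrt[symmetric] powr_def)
  moreover have "1 + u / 2 + (u / 2)^2 / 2 \<le> exp (u / 2)"
    using u0 by (intro exp_lower_Taylor_quadratic) simp
  ultimately have e: "8 + 4 * u + u^2 \<le> 8 * sqrt t"
    by (simp add: power2_eq_square field_simps)
  have "ln (1 + t) \<le> ln (2 * t)" using t by simp
  also have "\<dots> = ln 2 + u" using t by (simp add: ln_mult u_def)
  also have "\<dots> \<le> 1 + u" using ln_2_less_1 by simp
  finally have l: "ln (1 + t) \<le> 1 + u" .
  have "ln (1 + t) * ln t \<le> (1 + u) * u" unfolding u_def[symmetric] using l u0 by (intro mult_right_mono) auto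
  also have "\<dots> \<le> 8 + 4 * u + u^2" using u0 by (simp add: power2_eq_square algebra_simps)
  finally show ?thesis using e by simp
qed

lemma ln_mult_ln_one_plus_ratio_le:
  fixes n j :: real assumes n: "3 \<le> n" and j: "n \<le> j"
  shows "ln j * ln (1 + j / n) \<le> 10 * sqrt (j / n) * ln n"
proof -
  define t where "t = j / n"
  have t1: "1 \<le> t" using n j by (simp add: t_def)
  have lnn: "1 \<le> ln n" using ln_ge_1_of_ge_3[OF n] .
  have jt: "j = n * t" using n by (simp add: t_def)
  have "ln j = ln n + ln t" using n t1 by (simp add: jt ln_mult)
  then have "ln j * ln (1 + t) = ln n * ln (1 + t) + ln (1 + t) * ln t" by (simp add: algebra_simps)
  also have "\<dots> \<le> ln n * (2 * sqrt t) + 8 * sqrt t"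
    using ln_one_plus_le_two_sqrt[of t] ln_one_plus_mult_ln_le[OF t1] t1 lnn by (intro add_mono mult_left_mono) auto
  also have "\<dots> \<le> 10 * sqrt t * ln n" using lnn t1 by (simp add: algebra_simps)
  finally show ?thesis by (simp add: t_def)
qed

lemma inverse_mult_sqrt_le_diff:
  fixes x :: real assumes x: "2 \<le> x"
  shows "1 / (x * sqrt x) \<le> 2 / sqrt (x - 1) - 2 / sqrt x"
proof -
  define a where "a = sqrt (x - 1)"
  define b where "b = sqrt x"
  have a0: "0 < a" and b0: "0 < b" using x by (auto simp: a_def b_def)
  have ab: "a \<le> b" using x by (simp add: a_def b_def)
  have sq: "b * b - a * a = 1" using x by (simp add: a_def b_def)
  have "2 / a - 2 / b = 2 * (b - a) / (a * b)" using a0 b0 by (simp add: field_simps)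
  also have "b - a = 1 / (a + b)" using sq a0 b0 by (simp add: field_simps)
  finally have eq: "2 / a - 2 / b = 2 / (a * b * (a + b))" using a0 b0 by (simp add: field_simps)
  have "a * b * (a + b) \<le> b * b * (b + b)" using a0 b0 ab by (intro mult_mono add_mono) auto
  then have "2 / (b * b * (b + b)) \<le> 2 / (a * b * (a + b))" using a0 b0 by (intro divide_left_mono) auto
  moreover have "2 / (b * b * (b + b)) = 1 / (x * sqrt x)" using x b0 by (simp add: b_def field_simps)
  ultimately have "1 / (x * sqrt x) \<le> 2 / a - 2 / b" using eq by simp
  then show ?thesis by (simp add: a_def b_def)
qed

lemma
  assumes n: "1 \<le> n"
  shows summable_inverse_mult_sqrt_tail: "summable (\<lambda>k. 1 / (real (k + n + 1) * sqrt (real (k + n + 1))))"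
    and suminf_inverse_mult_sqrt_tail_le:
      "(\<Sum>k. 1 / (real (k + n + 1) * sqrt (real (k + n + 1)))) \<le> 2 / sqrt n"
proof -
  define g where "g k = 2 / sqrt (real (k + n))" for k
  have "g \<longlonglongrightarrow> 0"
  proof -
    have "filterlim (\<lambda>k. sqrt (real (k + n))) at_top sequentially"
      by (rule filterlim_compose[OF sqrt_at_top]) (rule filterlim_compose[OF filterlim_real_sequentially filterlim_add_const_nat_at_top])
    then have "(\<lambda>k. 2 / sqrt (real (k + n))) \<longlonglongrightarrow> 0"
      by (intro tendsto_divide_0[OF tendsto_const] filterlim_at_top_imp_at_infinity)
    then show ?thesis unfolding g_def .
  qed
  then have tel: "(\<lambda>k. g k - g (Suc k)) sums (g 0 - 0)" by (rule telescope_sums')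
  have le: "1 / (real (k + n + 1) * sqrt (real (k + n + 1))) \<le> g k - g (Suc k)" for k
  proof -
    have "1 / (real (k + n + 1) * sqrt (real (k + n + 1))) \<le> 2 / sqrt (real (k + n + 1) - 1) - 2 / sqrt (real (k + n + 1))"
      using n by (intro inverse_mult_sqrt_le_diff) simp
    then show ?thesis by (simp add: g_def add_ac)
  qed
  show summ: "summable (\<lambda>k. 1 / (real (k + n + 1) * sqrt (real (k + n + 1))))"
    by (rule summable_comparison_test'[OF sums_summable[OF tel], of 0]) (use le in auto)
  have "(\<Sum>k. 1 / (real (k + n + 1) * sqrt (real (k + n + 1)))) \<le> g 0 - 0"
    by (rule sums_le[OF le summable_sums[OF summ] tel])
  then show "(\<Sum>k. 1 / (real (k + n + 1) * sqrt (real (k + n + 1)))) \<le> 2 / sqrt n" by (simp add: g_def)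
qed

lemma asymp_equiv_log_powr_imp_bound:
  fixes mu :: "nat \<Rightarrow> real"
  assumes C1: "mu \<sim>[at_top] (\<lambda>n. b * ln (real n) powr \<alpha> / real n ^ 2)" and al: "\<alpha> \<le> 1"
  obtains C K where "0 \<le> C" "3 \<le> K" "\<And>k. K \<le> k \<Longrightarrow> mu k \<le> C * ln (real k) / (real k)\<^sup>2"
proof -
  have "eventually (\<lambda>k. norm (mu k) \<le> 2 * norm (b * ln (real k) powr \<alpha> / real k ^ 2)) at_top"
    by (rule asymp_equiv_imp_eventually_le[OF C1]) simp
  then obtain K0 where K0: "\<And>k. k \<ge> K0 \<Longrightarrow> norm (mu k) \<le> 2 * norm (b * ln (real k) powr \<alpha> / real k ^ 2)"
    by (auto simp: eventually_at_top_linorder)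
  define K where "K = max K0 3"
  have "mu k \<le> (2 * \<bar>b\<bar>) * ln (real k) / (real k)^2" if k: "k \<ge> K" for k
  proof -
    have k3: "3 \<le> real k" using k by (simp add: K_def)
    have lnk: "1 \<le> ln (real k)" using ln_ge_1_of_ge_3[OF k3] .
    have pw: "ln (real k) powr \<alpha> \<le> ln (real k)"
      using powr_mono[OF al lnk] lnk by simp
    have "mu k \<le> norm (mu k)" by simp
    also have "\<dots> \<le> 2 * norm (b * ln (real k) powr \<alpha> / real k ^ 2)" using K0 k by (simp add: K_def)
    also have "\<dots> = 2 * \<bar>b\<bar> * (ln (real k) powr \<alpha>) / real k ^ 2" using k3 lnk by (simp add: abs_mult)
    also have "\<dots> \<le> 2 * \<bar>b\<bar> * ln (real k) / real k ^ 2"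
      using pw by (intro divide_right_mono mult_left_mono) auto
    finally show ?thesis .
  qed
  then show ?thesis using that[of "2 * \<bar>b\<bar>" K] by (auto simp: K_def)
qed

locale log_square_tail =
  fixes mu :: "nat \<Rightarrow> real" and C :: real and K :: nat
  assumes mu_nonneg: "\<And>k. 0 \<le> mu k"
    and C_nonneg: "0 \<le> C" and K_ge_3: "3 \<le> K"
    and mu_le: "\<And>k. k \<ge> K \<Longrightarrow> mu k \<le> C * ln (real k) / (real k)^2"
begin

lemma summable_inverse_mult_sqrt: "summable (\<lambda>k. 1 / (real (k + 1) * sqrt (real (k + 1))))"
proof -
  have "summable (\<lambda>k. 1 / (real (k + 1 + 1) * sqrt (real (k + 1 + 1))))"
    using summable_inverse_mult_sqrt_tail[of 1] by simp
  then have "summable (\<lambda>k. (\<lambda>k. 1 / (real (k + 1) * sqrt (real (k + 1)))) (k + 1))" by simp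
  then show ?thesis by (subst (asm) summable_iff_shift)
qed

lemma summable_mu_ln: "summable (\<lambda>k. mu (k + 1) * ln (2 + real k))"
proof (rule summable_comparison_test'[where N=K])
  show "summable (\<lambda>k. 8 * C * (1 / (real (k + 1) * sqrt (real (k + 1)))))"
    by (intro summable_mult summable_inverse_mult_sqrt)
  fix k assume k: "K \<le> k"
  define j where "j = real (k + 1)"
  have j3: "3 \<le> j" using k K_ge_3 by (simp add: j_def)
  have "norm (mu (k + 1) * ln (2 + real k)) = mu (k + 1) * ln (1 + j)"
    using mu_nonneg[of "k+1"] by (simp add: j_def add_ac)
  also have "\<dots> \<le> C * ln j / j^2 * ln (1 + j)"
    using mu_le[of "k+1"] k j3 by (intro mult_right_mono) (auto simp: j_def)
  also have "\<dots> = C / j^2 * (ln (1 + j) * ln j)" by (simp add: field_simps)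
  also have "\<dots> \<le> C / j^2 * (8 * sqrt j)"
    using ln_one_plus_mult_ln_le[of j] j3 C_nonneg by (intro mult_left_mono) auto
  also have "\<dots> = 8 * C * (1 / (j * sqrt j))"
    using j3 by (simp add: field_simps power2_eq_square)
  finally show "norm (mu (k + 1) * ln (2 + real k)) \<le> 8 * C * (1 / (real (k + 1) * sqrt (real (k + 1))))"
    by (simp add: j_def)
qed

lemma summable_mu_ln_ratio:
  assumes n: "1 \<le> n"
  shows "summable (\<lambda>k. mu (k + 1) * ln (1 + real (k + 1) / real n))"
proof (rule summable_comparison_test'[OF summable_mu_ln, where N=0])
  fix k :: nat
  have a: "0 \<le> ln (1 + real (k + 1) / real n)" using n by simp
  have "real (k + 1) / real n \<le> real (k + 1)" using n by (simp add: divide_le_eq)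
  then have "1 + real (k + 1) / real n \<le> 2 + real k" by simp
  then have "ln (1 + real (k + 1) / real n) \<le> ln (2 + real k)" using n
    by (subst ln_le_cancel_iff) (auto intro: add_pos_nonneg)
  then show "norm (mu (k + 1) * ln (1 + real (k + 1) / real n)) \<le> mu (k + 1) * ln (2 + real k)"
    using mu_nonneg[of "k+1"] a by (simp add: mult_left_mono)
qed

lemma mu_mult_ln_ratio_le:
  assumes n: "K \<le> n" and j: "n \<le> j"
  shows "mu j * ln (1 + real j / real n) \<le> 10 * C * ln n / sqrt n * (1 / (real j * sqrt (real j)))"
proof -
  have n3: "3 \<le> real n" and jn: "real n \<le> real j" using n j K_ge_3 by auto
  then have j3: "3 \<le> real j" by simp
  have "mu j * ln (1 + real j / real n) \<le> C * ln j / (real j)\<^sup>2 * ln (1 + real j / real n)"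
    using mu_le[of j] n j n3 by (intro mult_right_mono) auto
  also have "\<dots> = C / (real j)\<^sup>2 * (ln j * ln (1 + real j / real n))" by (simp add: field_simps)
  also have "\<dots> \<le> C / (real j)\<^sup>2 * (10 * sqrt (real j / real n) * ln n)"
    using ln_mult_ln_one_plus_ratio_le[OF n3 jn] C_nonneg by (intro mult_left_mono) auto
  also have "\<dots> = 10 * C * ln n / sqrt n * (1 / (real j * sqrt (real j)))"
  proof -
    have "(real j)\<^sup>2 = real j * sqrt (real j) * sqrt (real j)" by (simp add: power2_eq_square)
    then show ?thesis using j3 n3 by (simp add: real_sqrt_divide field_simps)
  qed
  finally show ?thesis .
qed

lemma mu_tail_bound:
  assumes n: "K \<le> n"
  shows "real n * (\<Sum>k. mu (k + n + 1) * ln (1 + real (k + n + 1) / real n)) \<le> 20 * C * ln n"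
proof -
  have n3: "3 \<le> real n" using n K_ge_3 by simp
  define A where "A = 10 * C * ln n / sqrt n"
  have A_nonneg: "0 \<le> A" using n3 C_nonneg by (simp add: A_def)
  let ?a = "\<lambda>k. mu (k + n + 1) * ln (1 + real (k + n + 1) / real n)"
  let ?b = "\<lambda>k. A * (1 / (real (k + n + 1) * sqrt (real (k + n + 1))))"
  have ab: "?a k \<le> ?b k" for k
    unfolding A_def using mu_mult_ln_ratio_le[OF n, of "k + n + 1"] by simp
  have b: "summable ?b" using summable_inverse_mult_sqrt_tail[of n] n3 by (intro summable_mult) simp
  have a: "summable ?a"
    by (rule summable_comparison_test'[OF b, where N=0]) (use ab mu_nonneg n3 in \<open>auto intro!: mult_nonneg_nonneg\<close>)
  have "(\<Sum>k. ?a k) \<le> (\<Sum>k. ?b k)" by (rule suminf_le[OF ab a b])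
  also have "\<dots> = A * (\<Sum>k. 1 / (real (k + n + 1) * sqrt (real (k + n + 1))))"
    using summable_inverse_mult_sqrt_tail[of n] n3 by (intro suminf_mult) simp
  also have "\<dots> \<le> A * (2 / sqrt n)"
    using suminf_inverse_mult_sqrt_tail_le[of n] n3 A_nonneg by (intro mult_left_mono) auto
  finally have "real n * (\<Sum>k. ?a k) \<le> real n * (A * (2 / sqrt n))" using n3 by (intro mult_left_mono) auto
  also have "\<dots> = 20 * C * ln n"
  proof -
    have "sqrt (real n) * sqrt (real n) = real n" using n3 by simp
    then show ?thesis using n3 by (simp add: A_def field_simps)
  qed
  finally show ?thesis .
qed

lemma frag_moment_split:
  assumes n: "1 \<le> n"
  shows "real n * (\<Sum>k. mu (k + 1) * ln (1 + real (k + 1) / real n))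
     \<le> Phi_mu mu n / real n + real n * (\<Sum>k. mu (k + n + 1) * ln (1 + real (k + n + 1) / real n))"
proof -
  let ?f = "\<lambda>k. mu (k + 1) * ln (1 + real (k + 1) / real n)"
  have "(\<Sum>k. ?f k) = (\<Sum>k. ?f (k + n)) + (\<Sum>i<n. ?f i)"
    by (rule suminf_split_initial_segment[OF summable_mu_ln_ratio[OF n]])
  moreover have "(\<lambda>k. ?f (k + n)) = (\<lambda>k. mu (k + n + 1) * ln (1 + real (k + n + 1) / real n))"
    by (simp add: add_ac)
  moreover have "real n * (\<Sum>i<n. ?f i) \<le> Phi_mu mu n / real n"
  proof -
    have "real n * (\<Sum>i<n. ?f i) = (\<Sum>i<n. mu (i + 1) * (real n * ln (1 + real (i + 1) / real n)))"
      by (simp add: sum_distrib_left mult_ac)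
    also have "\<dots> \<le> (\<Sum>i<n. mu (i + 1) * real (i + 1))"
    proof (intro sum_mono mult_left_mono mu_nonneg)
      fix i
      have "ln (1 + real (i + 1) / real n) \<le> real (i + 1) / real n"
        by (rule ln_add_one_self_le_self) simp
      then have "real n * ln (1 + real (i + 1) / real n) \<le> real n * (real (i + 1) / real n)"
        using n by (intro mult_left_mono) auto
      then show "real n * ln (1 + real (i + 1) / real n) \<le> real (i + 1)" using n by simp
    qed
    also have "\<dots> = (\<Sum>k=1..n. real k * mu k)"
      using sum_bounds_lt_plus1[of "\<lambda>k. real k * mu k" n] by (simp add: mult.commute)
    also have "\<dots> = Phi_mu mu n / real n" using n by (simp add: Phi_mu_def)
    finally show ?thesis .
  qed
  ultimately show ?thesis by (simp add: distrib_left)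
qed

end

section \<open>A Lyapunov function for the block-counting chain\<close>

lemma lam_coef_nonneg: "0 \<le> lam_coef Lam n k"
  unfolding lam_coef_def set_lebesgue_integral_def
  by (intro integral_nonneg_AE AE_I2) (auto simp: indicator_def)

lemma bc_rate_nonneg: "(\<And>k. 0 \<le> mu k) \<Longrightarrow> 0 \<le> bc_rate Lam mu n y"
  using lam_coef_nonneg unfolding bc_rate_def by auto

lemma bc_total_rate_nonneg:
  "(\<And>k. 0 \<le> mu k) \<Longrightarrow> summable (\<lambda>k. mu (Suc k)) \<Longrightarrow> 0 \<le> bc_total_rate Lam mu n"
  unfolding bc_total_rate_def using lam_coef_nonneg
  by (intro add_nonneg_nonneg sum_nonneg mult_nonneg_nonneg suminf_nonneg) auto

lemma bc_jump_prob_nonneg: "(\<And>k. 0 \<le> mu k) \<Longrightarrow> 0 \<le> bc_jump_prob Lam mu n y"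
  unfolding bc_jump_prob_def using bc_rate_nonneg by auto

lemma
  fixes W :: "nat \<Rightarrow> real"
  assumes n: "1 \<le> n" and summ: "summable (\<lambda>k. mu (k + 1) * W (n + k + 1))"
  shows summable_bc_rate_mult: "summable (\<lambda>y. bc_rate Lam mu n y * W y)"
    and suminf_bc_rate_mult: "(\<Sum>y. bc_rate Lam mu n y * W y) =
        (\<Sum>k=2..n. real (n choose k) * lam_coef Lam n k * W (n - k + 1))
        + real n * (\<Sum>k. mu (k + 1) * W (n + k + 1))"
proof -
  let ?f = "\<lambda>y. bc_rate Lam mu n y * W y"
  have shift: "?f (k + (n + 1)) = real n * (mu (k + 1) * W (n + k + 1))" for k
    by (simp add: bc_rate_def add_ac)
  have "summable (\<lambda>k. real n * (mu (k + 1) * W (n + k + 1)))"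
    by (rule summable_mult[OF summ])
  then have s1: "summable (\<lambda>k. ?f (k + (n + 1)))" by (simp only: shift)
  then show sf: "summable ?f" by (subst (asm) summable_iff_shift)
  have "(\<Sum>y. ?f y) = (\<Sum>k. ?f (k + (n + 1))) + (\<Sum>i<n + 1. ?f i)"
    by (rule suminf_split_initial_segment[OF sf])
  also have "(\<Sum>k. ?f (k + (n + 1))) = real n * (\<Sum>k. mu (k + 1) * W (n + k + 1))"
    by (simp only: shift suminf_mult[OF summ])
  also have "(\<Sum>i<n + 1. ?f i) = (\<Sum>i\<in>{1..<n}. ?f i)"
  proof (rule sum.mono_neutral_right)
    show "{1..<n} \<subseteq> {..<n + 1}" by auto
    show "\<forall>i\<in>{..<n + 1} - {1..<n}. ?f i = 0" by (auto simp: bc_rate_def)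
  qed simp
  also have "\<dots> = (\<Sum>k=2..n. real (n choose k) * lam_coef Lam n k * W (n - k + 1))"
  proof (rule sum.reindex_bij_witness[where i = "\<lambda>k. n - k + 1" and j = "\<lambda>y. n - y + 1"])
    fix a assume a: "a \<in> {1..<n}"
    then show "n - (n - a + 1) + 1 = a" by auto
    show "n - a + 1 \<in> {2..n}" using a by auto
    show "real (n choose (n - a + 1)) * lam_coef Lam n (n - a + 1) * W (n - (n - a + 1) + 1) = ?f a"
      using a by (auto simp: bc_rate_def)
  next
    fix b assume b: "b \<in> {2..n}"
    then show "n - (n - b + 1) + 1 = b" by auto
    show "n - b + 1 \<in> {1..<n}" using b by auto
  qed
  finally show "(\<Sum>y. ?f y) = (\<Sum>k=2..n. real (n choose k) * lam_coef Lam n k * W (n - k + 1))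
        + real n * (\<Sum>k. mu (k + 1) * W (n + k + 1))" by simp
qed

locale lyapunov_drift = log_square_tail mu C K for mu :: "nat \<Rightarrow> real" and C K +
  fixes Lam :: "real measure" and m :: nat and r :: real
  assumes summable_mu: "summable (\<lambda>k. mu (Suc k))"
    and m_ge_1: "1 \<le> m"
    and eventually_drift_gt:
      "eventually (\<lambda>n. r < (Phi_Lam Lam n - Phi_mu mu n) / (\<Prod>l\<le>m. (ln ^^ l) (real n))) sequentially"
begin

definition lyap :: "nat \<Rightarrow> real" where
  "lyap n = 1 + ln1p_iter m (ln (real n))"

abbreviation slope :: "nat \<Rightarrow> real" where
  "slope n \<equiv> ln1p_iter_deriv m (ln (real n))"

definition frag_moment :: "nat \<Rightarrow> real" where
  "frag_moment n = real n * (\<Sum>k. mu (k + 1) * ln (1 + real (k + 1) / real n))"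

lemma lyap_ge_1: "1 \<le> lyap n"
  unfolding lyap_def using ln1p_iter_nonneg[OF ln_of_nat_nonneg] by simp

lemma slope_nonneg: "0 \<le> slope n"
  by (rule ln1p_iter_deriv_nonneg[OF ln_of_nat_nonneg])

lemma lyap_tangent: "lyap j \<le> lyap n + slope n * (ln (real j) - ln (real n))"
  using ln1p_iter_concave[of "ln (real n)" "ln (real j)" m] ln_of_nat_nonneg unfolding lyap_def by simp

lemma lyap_at_top: "filterlim lyap at_top sequentially"
  unfolding lyap_def
  by (intro filterlim_tendsto_add_at_top[OF tendsto_const] filterlim_compose[OF ln1p_iter_at_top]
      filterlim_compose[OF ln_at_top filterlim_real_sequentially])

lemma lyap_up_le: "1 \<le> n \<Longrightarrow> lyap (n + k + 1) \<le> lyap n + slope n * ln (1 + real (k + 1) / real n)"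
proof -
  assume n: "1 \<le> n"
  have "1 + real (k + 1) / real n = real (n + k + 1) / real n"
    using n by (simp add: field_simps)
  then have "ln (real (n + k + 1)) - ln (real n) = ln (1 + real (k + 1) / real n)"
    using n by (simp add: ln_div)
  then show ?thesis using lyap_tangent[of "n + k + 1" n] by simp
qed

lemma coalescence_part_le:
  assumes n: "1 \<le> n"
  shows "(\<Sum>k=2..n. real (n choose k) * lam_coef Lam n k * lyap (n - k + 1))
     \<le> lyap n * (\<Sum>k=2..n. real (n choose k) * lam_coef Lam n k) - slope n * Phi_Lam Lam n / real n"
proof -
  have "(\<Sum>k=2..n. real (n choose k) * lam_coef Lam n k * lyap (n - k + 1))
     \<le> (\<Sum>k=2..n. real (n choose k) * lam_coef Lam n k * (lyap n - slope n * ((real k - 1) / real n)))"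
  proof (intro sum_mono mult_left_mono)
    fix k assume k: "k \<in> {2..n}"
    have "ln (real (n - k + 1)) - ln (real n) \<le> (real (n - k + 1) - real n) / real n"
      using n k by (intro ln_diff_le) auto
    also have "\<dots> = - ((real k - 1) / real n)"
      using k by (simp add: of_nat_diff field_simps)
    finally have "slope n * (ln (real (n - k + 1)) - ln (real n)) \<le> slope n * - ((real k - 1) / real n)"
      by (rule mult_left_mono[OF _ slope_nonneg])
    then show "lyap (n - k + 1) \<le> lyap n - slope n * ((real k - 1) / real n)"
      using lyap_tangent[of "n - k + 1" n] by simp
    show "0 \<le> real (n choose k) * lam_coef Lam n k" using lam_coef_nonneg by simp
  qed
  also have "\<dots> = lyap n * (\<Sum>k=2..n. real (n choose k) * lam_coef Lam n k)
      - slope n / real n * (\<Sum>k=2..n. real (n choose k) * lam_coef Lam n k * (real k - 1))"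
    by (simp add: sum_subtractf sum_distrib_left right_diff_distrib mult_ac)
  also have "\<dots> = lyap n * (\<Sum>k=2..n. real (n choose k) * lam_coef Lam n k) - slope n * Phi_Lam Lam n / real n"
    by (simp add: Phi_Lam_def)
  finally show ?thesis .
qed

lemma
  assumes n: "1 \<le> n"
  shows summable_frag_lyap: "summable (\<lambda>k. mu (k + 1) * lyap (n + k + 1))"
    and fragmentation_part_le:
      "real n * (\<Sum>k. mu (k + 1) * lyap (n + k + 1)) \<le> lyap n * (real n * (\<Sum>k. mu (Suc k))) + slope n * frag_moment n"
proof -
  let ?g = "\<lambda>k. lyap n * mu (k + 1) + slope n * (mu (k + 1) * ln (1 + real (k + 1) / real n))"
  have le: "mu (k + 1) * lyap (n + k + 1) \<le> ?g k" for k
    using mult_left_mono[OF lyap_up_le[OF n, of k] mu_nonneg[of "k + 1"]] by (simp add: algebra_simps)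
  have g: "summable ?g"
    using summable_mu summable_mu_ln_ratio[OF n] by (intro summable_add summable_mult) auto
  have nonneg: "0 \<le> mu (k + 1) * lyap (n + k + 1)" for k
    using mu_nonneg lyap_ge_1 by (auto intro: mult_nonneg_nonneg order_trans[OF zero_le_one])
  show summable: "summable (\<lambda>k. mu (k + 1) * lyap (n + k + 1))"
  proof (rule summable_comparison_test'[OF g, of 0])
    fix k
    show "norm (mu (k + 1) * lyap (n + k + 1)) \<le> ?g k"
      using le[of k] nonneg[of k] by simp
  qed
  have "(\<Sum>k. mu (k + 1) * lyap (n + k + 1)) \<le> (\<Sum>k. ?g k)"
    by (rule suminf_le[OF le summable g])
  also have "\<dots> = lyap n * (\<Sum>k. mu (Suc k)) + slope n * (\<Sum>k. mu (k + 1) * ln (1 + real (k + 1) / real n))"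
    using summable_mu summable_mu_ln_ratio[OF n]
    by (subst suminf_add[symmetric]) (auto intro: summable_mult simp: suminf_mult)
  finally have "real n * (\<Sum>k. mu (k + 1) * lyap (n + k + 1)) \<le> real n * (lyap n * (\<Sum>k. mu (Suc k))
      + slope n * (\<Sum>k. mu (k + 1) * ln (1 + real (k + 1) / real n)))"
    by (rule mult_left_mono) simp
  then show "real n * (\<Sum>k. mu (k + 1) * lyap (n + k + 1))
      \<le> lyap n * (real n * (\<Sum>k. mu (Suc k))) + slope n * frag_moment n"
    by (simp add: frag_moment_def algebra_simps)
qed

lemma
  assumes n: "1 \<le> n"
  shows summable_bc_rate_mult_lyap: "summable (\<lambda>y. bc_rate Lam mu n y * lyap y)"
    and suminf_bc_rate_mult_lyap_le: "(\<Sum>y. bc_rate Lam mu n y * lyap y)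
      \<le> bc_total_rate Lam mu n * lyap n + slope n * (frag_moment n - Phi_Lam Lam n / real n)"
proof -
  show "summable (\<lambda>y. bc_rate Lam mu n y * lyap y)"
    by (rule summable_bc_rate_mult[OF n summable_frag_lyap[OF n]])
  have "(\<Sum>y. bc_rate Lam mu n y * lyap y) =
        (\<Sum>k=2..n. real (n choose k) * lam_coef Lam n k * lyap (n - k + 1))
        + real n * (\<Sum>k. mu (k + 1) * lyap (n + k + 1))"
    by (rule suminf_bc_rate_mult[OF n summable_frag_lyap[OF n]])
  also have "\<dots> \<le> (lyap n * (\<Sum>k=2..n. real (n choose k) * lam_coef Lam n k) - slope n * Phi_Lam Lam n / real n)
      + (lyap n * (real n * (\<Sum>k. mu (Suc k))) + slope n * frag_moment n)"
    by (intro add_mono coalescence_part_le[OF n] fragmentation_part_le[OF n])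
  also have "\<dots> = bc_total_rate Lam mu n * lyap n + slope n * (frag_moment n - Phi_Lam Lam n / real n)"
    by (simp add: bc_total_rate_def algebra_simps)
  finally show "(\<Sum>y. bc_rate Lam mu n y * lyap y)
      \<le> bc_total_rate Lam mu n * lyap n + slope n * (frag_moment n - Phi_Lam Lam n / real n)" .
qed

lemma eventually_drift_remainder_le:
  "eventually (\<lambda>n. slope n * (frag_moment n - Phi_Lam Lam n / real n) \<le> \<bar>r\<bar> + 20 * C) sequentially"
  using eventually_drift_gt eventually_iter_ln_pos[of m] eventually_ge_at_top[of K]
proof eventually_elim
  case (elim n)
  then have n: "1 \<le> n" and rn: "1 \<le> real n" using K_ge_3 by auto
  define Q where "Q = (\<Prod>l<m. (ln ^^ (Suc l)) (real n))"
  have Q_pos: "0 < Q" unfolding Q_def using elim(2) by (intro prod_pos) (auto simp del: funpow.simps)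
  have "(\<Prod>l\<le>m. (ln ^^ l) (real n)) = real n * Q"
    unfolding Q_def by (subst prod.atMost_shift) simp
  with elim(1) have "r * (real n * Q) < Phi_Lam Lam n - Phi_mu mu n"
    using Q_pos rn by (simp add: pos_less_divide_eq)
  then have "Phi_mu mu n - Phi_Lam Lam n \<le> \<bar>r\<bar> * (real n * Q)"
    using Q_pos rn by (smt (verit) mult_nonneg_nonneg mult_minus_left abs_ge_minus_self mult_right_mono)
  then have drift: "(Phi_mu mu n - Phi_Lam Lam n) / real n \<le> \<bar>r\<bar> * Q"
    using rn by (simp add: field_simps)
  have "frag_moment n \<le> Phi_mu mu n / real n + real n * (\<Sum>k. mu (k + n + 1) * ln (1 + real (k + n + 1) / real n))"
    unfolding frag_moment_def by (rule frag_moment_split[OF n])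
  also have "\<dots> \<le> Phi_mu mu n / real n + 20 * C * ln n"
    using mu_tail_bound[OF elim(3)] by simp
  finally have "frag_moment n - Phi_Lam Lam n / real n \<le> \<bar>r\<bar> * Q + 20 * C * ln n"
    using drift by (simp add: diff_divide_distrib)
  then have "slope n * (frag_moment n - Phi_Lam Lam n / real n) \<le> \<bar>r\<bar> * (slope n * Q) + 20 * C * (slope n * ln n)"
    using slope_nonneg[of n] by (smt (verit) distrib_left mult.left_commute mult_left_mono)
  also have "\<dots> \<le> \<bar>r\<bar> * 1 + 20 * C * 1"
  proof (intro add_mono mult_left_mono)
    show "slope n * Q \<le> 1"
      unfolding Q_def using elim(2) by (intro ln1p_iter_deriv_mult_iter_ln_le_1) auto
    have "slope n * ln n \<le> 1 / (1 + ln (real n)) * ln n"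
      using ln1p_iter_deriv_le_inverse[OF m_ge_1 ln_of_nat_nonneg] ln_of_nat_nonneg by (intro mult_right_mono)
    also have "\<dots> \<le> 1" using ln_of_nat_nonneg[of n] by simp
    finally show "slope n * ln n \<le> 1" .
  qed (use C_nonneg in auto)
  finally show ?case by simp
qed

lemma drift_remainder_bounded: "\<exists>c>0. \<forall>n. slope n * (frag_moment n - Phi_Lam Lam n / real n) \<le> c"
proof -
  obtain N where N: "\<And>n. N \<le> n \<Longrightarrow> slope n * (frag_moment n - Phi_Lam Lam n / real n) \<le> \<bar>r\<bar> + 20 * C"
    using eventually_drift_remainder_le by (auto simp: eventually_sequentially)
  define R where "R = Max ((\<lambda>n. slope n * (frag_moment n - Phi_Lam Lam n / real n)) ` {..N})"
  have "slope n * (frag_moment n - Phi_Lam Lam n / real n) \<le> \<bar>r\<bar> + 20 * C + \<bar>R\<bar> + 1" for n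
  proof (cases "N \<le> n")
    case False
    then have "slope n * (frag_moment n - Phi_Lam Lam n / real n) \<le> R"
      unfolding R_def by (intro Max_ge) auto
    then show ?thesis using C_nonneg by linarith
  qed (use N[of n] in linarith)
  then show ?thesis by (intro exI[of _ "\<bar>r\<bar> + 20 * C + \<bar>R\<bar> + 1"]) (use C_nonneg in auto)
qed

lemma lyap_superharmonic:
  assumes c: "\<And>n. slope n * (frag_moment n - Phi_Lam Lam n / real n) \<le> c" and c_nonneg: "0 \<le> c"
  shows "ennreal (1 / (1 + c / bc_total_rate Lam mu x)) *
      (\<Sum>y. ennreal (bc_jump_prob Lam mu x y) * ennreal (lyap y)) \<le> ennreal (lyap x)"
proof (cases "bc_total_rate Lam mu x > 0")
  case False
  then have q: "bc_total_rate Lam mu x = 0"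
    using bc_total_rate_nonneg[OF mu_nonneg summable_mu, of Lam x] by simp
  have "(\<Sum>y. ennreal (bc_jump_prob Lam mu x y) * ennreal (lyap y))
      = (\<Sum>y\<in>{x}. ennreal (bc_jump_prob Lam mu x y) * ennreal (lyap y))"
    by (intro suminf_finite) (auto simp: bc_jump_prob_def q)
  then show ?thesis by (simp add: q bc_jump_prob_def)
next
  case True
  define q where "q = bc_total_rate Lam mu x"
  define S where "S = (\<Sum>y. bc_rate Lam mu x y * lyap y)"
  have q_pos: "0 < q" using True by (simp add: q_def)
  have x: "1 \<le> x"
    using True by (cases x) (auto simp: bc_total_rate_def)
  have summable: "summable (\<lambda>y. bc_rate Lam mu x y * lyap y / q)"
    by (intro summable_divide summable_bc_rate_mult_lyap[OF x])
  have "S \<le> q * lyap x + c"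
    unfolding S_def q_def using suminf_bc_rate_mult_lyap_le[OF x] c[of x] by linarith
  also have "\<dots> \<le> (q + c) * lyap x"
    using lyap_ge_1[of x] c_nonneg by (simp add: distrib_right mult_le_cancel_left1)
  finally have S: "S \<le> (q + c) * lyap x" .
  have "(\<Sum>y. ennreal (bc_jump_prob Lam mu x y) * ennreal (lyap y)) = (\<Sum>y. ennreal (bc_rate Lam mu x y * lyap y / q))"
    using True q_pos lyap_ge_1 bc_rate_nonneg[OF mu_nonneg]
    by (intro suminf_cong) (simp add: bc_jump_prob_def q_def ennreal_mult'[symmetric])
  also have "\<dots> = ennreal (S / q)"
    using q_pos lyap_ge_1 bc_rate_nonneg[OF mu_nonneg] unfolding S_def
    by (subst suminf_ennreal2[OF _ summable]) (auto simp: suminf_divide[OF summable_bc_rate_mult_lyap[OF x]] order_trans[OF zero_le_one])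
  finally have sum_eq: "(\<Sum>y. ennreal (bc_jump_prob Lam mu x y) * ennreal (lyap y)) = ennreal (S / q)" .
  have "1 / (1 + c / q) * (S / q) = S / (q + c)" and "0 \<le> 1 / (1 + c / q)"
    using q_pos c_nonneg by (simp_all add: field_simps)
  then have "ennreal (1 / (1 + c / q)) * (\<Sum>y. ennreal (bc_jump_prob Lam mu x y) * ennreal (lyap y))
      = ennreal (S / (q + c))"
    unfolding sum_eq by (metis ennreal_mult')
  also have "\<dots> \<le> ennreal (lyap x)"
    using S q_pos c_nonneg by (intro ennreal_leI) (simp add: pos_divide_le_eq mult.commute)
  finally show ?thesis unfolding q_def .
qed

end

lemma liminf_gt_MInf_imp_eventually_gt:
  fixes f :: "nat \<Rightarrow> real"
  assumes "liminf (\<lambda>n. ereal (f n)) > -\<infinity>"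
  obtains r where "eventually (\<lambda>n. r < f n) sequentially"
proof -
  obtain r where "ereal r < liminf (\<lambda>n. ereal (f n))"
  proof (cases "liminf (\<lambda>n. ereal (f n))")
    case (real a)
    then show ?thesis using that[of "a - 1"] by simp
  next
    case PInf
    then show ?thesis using that[of 0] by simp
  qed (use assms in simp)
  then show ?thesis
    using less_LiminfD that by fastforce
qed

lemma bc_realization_jump_chain:
  assumes "bc_realization Lam mu n0 M X E" and "\<And>k. 0 \<le> mu k"
  shows "jump_chain M X E (bc_jump_prob Lam mu) n0"
  using assms bc_jump_prob_nonneg
  unfolding bc_realization_def jump_chain_def jump_chain_axioms_def by blast

theorem theorem2p2:
  fixes Lam :: "real measure" and mu :: "nat \<Rightarrow> real" and b \<alpha> :: real
    and M :: "nat \<Rightarrow> 'w measure" and X :: "nat \<Rightarrow> nat \<Rightarrow> 'w \<Rightarrow> nat"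
    and E :: "nat \<Rightarrow> nat \<Rightarrow> 'w \<Rightarrow> real"
  assumes Lam_finite: "finite_measure Lam"
    and Lam_sets: "sets Lam = sets borel"
    and Lam_supp: "emeasure Lam (- {0..1}) = 0"
    and Lam_one: "emeasure Lam {1} = 0"
    and Lam_ac: "absolutely_continuous lborel Lam"
    and mu_nonneg: "\<And>k. 0 \<le> mu k"
    and mu_finite: "summable (\<lambda>k. mu (Suc k))"
    and C1: "mu \<sim>[at_top] (\<lambda>n. b * ln (real n) powr \<alpha> / real n ^ 2)"
    and b_pos: "b > 0"
    and alpha: "0 < \<alpha>" "\<alpha> \<le> 1"
    and N_process: "\<And>n0. n0 \<ge> 1 \<Longrightarrow> bc_realization Lam mu n0 (M n0) (X n0) (E n0)"
    and liminf_cond: "\<exists>m::nat. m \<ge> 1 \<and>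
        liminf (\<lambda>n. ereal ((Phi_Lam Lam n - Phi_mu mu n) / (\<Prod>l\<le>m. (ln ^^ l) (real n)))) > -\<infinity>"
  shows "\<not> bc_explodes Lam mu M X E"
proof
  assume explodes: "bc_explodes Lam mu M X E"
  obtain m r where m: "1 \<le> m"
    and drift: "eventually (\<lambda>n. r < (Phi_Lam Lam n - Phi_mu mu n) / (\<Prod>l\<le>m. (ln ^^ l) (real n))) sequentially"
    using liminf_cond liminf_gt_MInf_imp_eventually_gt by metis
  obtain C K where "0 \<le> C" "3 \<le> K" "\<And>k. K \<le> k \<Longrightarrow> mu k \<le> C * ln (real k) / (real k)\<^sup>2"
    using asymp_equiv_log_powr_imp_bound[OF C1 alpha(2)] by blast
  then interpret lyapunov_drift mu C K Lam m r
    by unfold_locales (use mu_nonneg mu_finite m drift in auto)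
  obtain c where c: "0 < c" "\<And>n. slope n * (frag_moment n - Phi_Lam Lam n / real n) \<le> c"
    using drift_remainder_bounded by blast
  interpret N: jump_chain "M 1" "X 1" "E 1" "bc_jump_prob Lam mu" 1
    using bc_realization_jump_chain[OF N_process mu_nonneg] by simp
  have "N.prob {\<omega>\<in>space (M 1). bc_explodes_on Lam mu (X 1) (E 1) \<omega>} = 0"
    unfolding bc_explodes_on_def
    using N.prob_explosion_eq_0[OF bc_total_rate_nonneg[OF mu_nonneg mu_finite] c(1) _ lyap_at_top
        lyap_superharmonic[OF c(2) less_imp_le[OF c(1)]]] order_trans[OF zero_le_one lyap_ge_1]
    by blast
  with explodes show False
    unfolding bc_explodes_def by simp
qed

end
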